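(* Let $\alpha\in(0,1)$, $\beta\in(1,2)$ and $\sigma=1-\frac{\alpha}{2}$. The fully discrete scheme described in the context is unconditionally stable; moreover, for sufficiently small temporal stepsize $\tau$ and spatial stepsize $h$, its solution $U^n=(U^n_0,\dots,U^n_M)$ satisfies $$\|U^n\|_h^2\le\|U^0\|_h^2+\frac{(b-a)^\beta\Gamma(1-\alpha)}{c^{(\beta)}_\ast\tilde a^{\alpha}}\max_{0\le k\le n-1}\Big\{\big((k+\sigma)\tau\big)^{\alpha}\|f^{k+\sigma}\|_h^2\Big\},\qquad 1\le n\le N,$$ where $c^{(\beta)}_\ast=\frac{(1-\beta)(2-\beta)(3-\beta)4^{\beta}e^{-9/4}\Psi_\beta}{3}$.
   Context: Time grid: $\tilde a>0$, $T>\tilde a$, $N\in\mathbb{Z}^+$, $\tau=(T-\tilde a)/N$, $t_k=\tilde a+k\tau$, $t_{k+\sigma}=t_k+\sigma\tau$. L2-1$_\sigma$ coefficients: for $1\le i\le k$, $a^{(\alpha,\sigma)}_{i,k}=(\log\frac{t_{k+\sigma}}{t_{i-1}})^{1-\alpha}-(\log\frac{t_{k+\sigma}}{t_{i}})^{1-\alpha}$, $b^{(\alpha,\sigma)}_{i,k}=\frac{1}{\log\frac{t_{i+1}}{t_{i-1}}}\{\frac{2}{2-\alpha}[(\log\frac{t_{k+\sigma}}{t_{i-1}})^{2-\alpha}-(\log\frac{t_{k+\sigma}}{t_{i}})^{2-\alpha}]-\log\frac{t_i}{t_{i-1}}[(\log\frac{t_{k+\sigma}}{t_{i}})^{1-\alpha}+(\log\frac{t_{k+\sigma}}{t_{i-1}})^{1-\alpha}]\}$;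 $c^{(\alpha,\sigma)}_{1,0}=\frac{(\log\frac{t_\sigma}{t_0})^{1-\alpha}}{\Gamma(2-\alpha)\log\frac{t_1}{t_0}}$; for $k\ge1$: $c^{(\alpha,\sigma)}_{1,k}=\frac{a^{(\alpha,\sigma)}_{1,k}-b^{(\alpha,\sigma)}_{1,k}}{\Gamma(2-\alpha)\log\frac{t_1}{t_0}}$, $c^{(\alpha,\sigma)}_{i,k}=\frac{a^{(\alpha,\sigma)}_{i,k}+b^{(\alpha,\sigma)}_{i-1,k}-b^{(\alpha,\sigma)}_{i,k}}{\Gamma(2-\alpha)\log\frac{t_i}{t_{i-1}}}$ ($2\le i\le k$), $c^{(\alpha,\sigma)}_{k+1,k}=\frac{b^{(\alpha,\sigma)}_{k,k}+(\log\frac{t_{k+\sigma}}{t_k})^{1-\alpha}}{\Gamma(2-\alpha)\log\frac{t_{k+1}}{t_k}}$. Space grid: $a<b$, $M\in\mathbb{Z}^+$, $h=(b-a)/M$, $x_j=a+jh$; $(w,v)_h=h\sum_{j=1}^{M-1}w_jv_j$, $\|w\|_h^2=(w,w)_h$. Riesz coefficients: $g^{(\beta)}_k=(-1)^k\binom{\beta}{k}$, $\Psi_\beta=\frac{1}{2\cos(\pi\beta/2)}$, $r^{(\beta)}_0=2\Psi_\beta(\frac{\beta}{2}g^{(\beta)}_1+\frac{2-\beta}{2}g^{(\beta)}_0)$, $r^{(\beta)}_1=\Psi_\beta(\frac{\beta}{2}g^{(\beta)}_0+\frac{2-\beta}{2}g^{(\beta)}_1+\frac{\beta}{2}g^{(\beta)}_2)$,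 $r^{(\beta)}_k=\Psi_\beta(\frac{\beta}{2}g^{(\beta)}_{k+1}+\frac{2-\beta}{2}g^{(\beta)}_k)$ ($k\ge2$), $r^{(\beta)}_{-k}=r^{(\beta)}_k$. Scheme: given $u_0$ and $f$, with $f^{n+\sigma}_j=f(x_j,t_{n+\sigma})$, find $U^n_j$ with $\sum_{i=1}^{n+1}c^{(\alpha,\sigma)}_{i,n}(U^i_j-U^{i-1}_j)+h^{-\beta}\sum_{k=0}^{M}r^{(\beta)}_{j-k}\big(\sigma U^{n+1}_k+(1-\sigma)U^n_k\big)=f^{n+\sigma}_j$ for $0\le n\le N-1$, $1\le j\le M-1$; $U^0_j=u_0(x_j)$; $U^n_0=U^n_M=0$ for $0\le n\le N$. Here $f^{k+\sigma}=(f^{k+\sigma}_j)_j$. *)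

theory Defs
  imports "HOL-Analysis.Analysis"
begin

text \<open>Time grid on [ta, T] with N steps: t_s = ta + s*tau, tau = (T - ta)/N, s real
  (so that t_{k+sigma} = tg ta T N (k + sigma)).\<close>
definition tg :: "real \<Rightarrow> real \<Rightarrow> nat \<Rightarrow> real \<Rightarrow> real" where
  "tg ta T N s = ta + s * ((T - ta) / real N)"

definition a_coef :: "real \<Rightarrow> real \<Rightarrow> real \<Rightarrow> real \<Rightarrow> nat \<Rightarrow> nat \<Rightarrow> nat \<Rightarrow> real" where
  "a_coef \<alpha> \<sigma> ta T N i k =
     (ln (tg ta T N (real k + \<sigma>) / tg ta T N (real i - 1))) powr (1 - \<alpha>)
   - (ln (tg ta T N (real k + \<sigma>) / tg ta T N (real i))) powr (1 - \<alpha>)"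

definition b_coef :: "real \<Rightarrow> real \<Rightarrow> real \<Rightarrow> real \<Rightarrow> nat \<Rightarrow> nat \<Rightarrow> nat \<Rightarrow> real" where
  "b_coef \<alpha> \<sigma> ta T N i k =
     (1 / ln (tg ta T N (real i + 1) / tg ta T N (real i - 1))) *
     (2 / (2 - \<alpha>) *
        ((ln (tg ta T N (real k + \<sigma>) / tg ta T N (real i - 1))) powr (2 - \<alpha>)
       - (ln (tg ta T N (real k + \<sigma>) / tg ta T N (real i))) powr (2 - \<alpha>))
      - ln (tg ta T N (real i) / tg ta T N (real i - 1)) *
        ((ln (tg ta T N (real k + \<sigma>) / tg ta T N (real i))) powr (1 - \<alpha>)
       + (ln (tg ta T N (real k + \<sigma>) / tg ta T N (real i - 1))) powr (1 - \<alpha>)))"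

text \<open>c_{i,k}; only used for 1 <= i <= k+1.\<close>
definition c_coef :: "real \<Rightarrow> real \<Rightarrow> real \<Rightarrow> real \<Rightarrow> nat \<Rightarrow> nat \<Rightarrow> nat \<Rightarrow> real" where
  "c_coef \<alpha> \<sigma> ta T N i k =
    (if k = 0 then
       (ln (tg ta T N \<sigma> / tg ta T N 0)) powr (1 - \<alpha>)
         / (Gamma (2 - \<alpha>) * ln (tg ta T N 1 / tg ta T N 0))
     else if i = k + 1 then
       (b_coef \<alpha> \<sigma> ta T N k k + (ln (tg ta T N (real k + \<sigma>) / tg ta T N (real k))) powr (1 - \<alpha>))
         / (Gamma (2 - \<alpha>) * ln (tg ta T N (real k + 1) / tg ta T N (real k)))
     else if i = 1 then
       (a_coef \<alpha> \<sigma> ta T N 1 k - b_coef \<alpha> \<sigma> ta T N 1 k)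
         / (Gamma (2 - \<alpha>) * ln (tg ta T N 1 / tg ta T N 0))
     else
       (a_coef \<alpha> \<sigma> ta T N i k + b_coef \<alpha> \<sigma> ta T N (i - 1) k - b_coef \<alpha> \<sigma> ta T N i k)
         / (Gamma (2 - \<alpha>) * ln (tg ta T N (real i) / tg ta T N (real i - 1))))"

definition gR :: "real \<Rightarrow> nat \<Rightarrow> real" where
  "gR \<beta> k = (-1) ^ k * (\<beta> gchoose k)"

definition PsiR :: "real \<Rightarrow> real" where
  "PsiR \<beta> = 1 / (2 * cos (pi * \<beta> / 2))"

definition rR :: "real \<Rightarrow> nat \<Rightarrow> real" where
  "rR \<beta> k =
    (if k = 0 then 2 * PsiR \<beta> * (\<beta> / 2 * gR \<beta> 1 + (2 - \<beta>) / 2 * gR \<beta> 0)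
     else if k = 1 then PsiR \<beta> * (\<beta> / 2 * gR \<beta> 0 + (2 - \<beta>) / 2 * gR \<beta> 1 + \<beta> / 2 * gR \<beta> 2)
     else PsiR \<beta> * (\<beta> / 2 * gR \<beta> (k + 1) + (2 - \<beta>) / 2 * gR \<beta> k))"

definition rZ :: "real \<Rightarrow> int \<Rightarrow> real" where
  "rZ \<beta> k = rR \<beta> (nat \<bar>k\<bar>)"

definition cstar :: "real \<Rightarrow> real" where
  "cstar \<beta> = (1 - \<beta>) * (2 - \<beta>) * (3 - \<beta>) * 4 powr \<beta> * exp (- 9 / 4) * PsiR \<beta> / 3"

definition xg :: "real \<Rightarrow> real \<Rightarrow> nat \<Rightarrow> nat \<Rightarrow> real" where
  "xg a b M j = a + real j * ((b - a) / real M)"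

definition normh2 :: "real \<Rightarrow> real \<Rightarrow> nat \<Rightarrow> (nat \<Rightarrow> real) \<Rightarrow> real" where
  "normh2 a b M w = ((b - a) / real M) * (\<Sum>j = 1..M - 1. (w j)\<^sup>2)"

text \<open>U n j is U^n_j; f x t is the source; u0 the initial datum.\<close>
definition scheme ::
  "real \<Rightarrow> real \<Rightarrow> real \<Rightarrow> real \<Rightarrow> real \<Rightarrow> nat \<Rightarrow> real \<Rightarrow> real \<Rightarrow> nat
   \<Rightarrow> (real \<Rightarrow> real) \<Rightarrow> (real \<Rightarrow> real \<Rightarrow> real) \<Rightarrow> (nat \<Rightarrow> nat \<Rightarrow> real) \<Rightarrow> bool" where
  "scheme \<alpha> \<beta> \<sigma> ta T N a b M u0 f U \<longleftrightarrow>
     (\<forall>n < N. \<forall>j \<in> {1..M - 1}.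
        (\<Sum>i = 1..n + 1. c_coef \<alpha> \<sigma> ta T N i n * (U i j - U (i - 1) j))
        + ((b - a) / real M) powr (- \<beta>) *
          (\<Sum>k = 0..M. rZ \<beta> (int j - int k) * (\<sigma> * U (n + 1) k + (1 - \<sigma>) * U n k))
        = f (xg a b M j) (tg ta T N (real n + \<sigma>)))
   \<and> (\<forall>j \<in> {1..M - 1}. U 0 j = u0 (xg a b M j))
   \<and> (\<forall>n \<le> N. U n 0 = 0 \<and> U n M = 0)"

end

(* In the variable s = ln t the L2-1_sigma coefficients c_{i,k} are combinations of integrals of the
   kernel (S - s) powr (- alpha), S = ln t_{k+sigma}, against piecewise linear weights on the cells
   [ln t_{i-1}, ln t_i].  Monotonicity and convexity of the kernel give
   c_{1,k} <= c_{2,k} <= ... <= c_{k,k} and sigma^2 c_{k,k} <= (1 - alpha) c_{k+1,k}, as soon as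
   consecutive logarithmic steps differ by a factor at most 5/4 (tau <= ta / 8), together with the
   lower bound c_{1,k} >= ((k + sigma) tau / ta) powr (- alpha) / Gamma (1 - alpha).  Under these
   conditions Alikhanov's argument bounds the discrete derivative of |U|^2 by twice the discrete
   derivative of U times sigma U^{n+1} + (1 - sigma) U^n.  The Riesz matrix is symmetric with
   nonpositive off-diagonal entries and row sums at least Psi_beta G_M >= cstar / 2 * M powr (- beta)
   for M >= 3, which gives coercivity with constant cstar / (2 (b - a) powr beta).  Young's inequality then
   bounds each time step by (b - a) powr beta / cstar * |f^{k+sigma}|^2, and a discrete maximum
   principle for the weighted increments converts this into the stated bound. *)

theory Submission
  imports Defs
begin

lemma ln_one_plus_ge_divide:
  fixes x :: real
  assumes "0 \<le> x"
  shows "x / (1 + x) \<le> ln (1 + x)"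
proof -
  have "ln (1 / (1 + x)) \<le> 1 / (1 + x) - 1" using assms by (intro ln_le_minus_one) auto
  then show ?thesis using assms by (simp add: ln_div field_simps)
qed

lemma mult_ln_one_plus_le:
  fixes x \<sigma> :: real
  assumes "0 \<le> \<sigma>" "\<sigma> \<le> 1" "0 \<le> x"
  shows "\<sigma> * ln (1 + x) \<le> ln (1 + \<sigma> * x)"
proof -
  have "(1 + x) powr \<sigma> * 1 powr (1 - \<sigma>) \<le> \<sigma> * (1 + x) + (1 - \<sigma>) * 1"
    using assms by (intro Youngs_inequality_0) auto
  then have "(1 + x) powr \<sigma> \<le> 1 + \<sigma> * x" by (simp add: algebra_simps)
  then have "ln ((1 + x) powr \<sigma>) \<le> ln (1 + \<sigma> * x)"
    using assms by (subst ln_le_cancel_iff) (auto simp: add_pos_nonneg)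
  then show ?thesis using assms by (simp add: ln_powr)
qed

lemma powr_neg_decrement_le:
  fixes X d \<alpha> :: real
  assumes "0 < X" "0 \<le> d" "0 \<le> \<alpha>"
  shows "X powr (- \<alpha>) - (X + d) powr (- \<alpha>) \<le> \<alpha> * X powr (- \<alpha>) * d / X"
proof -
  have z: "0 \<le> d / X" using assms by simp
  have "1 - \<alpha> * (d / X) \<le> 1 - \<alpha> * ln (1 + d / X)"
    using mult_left_mono[OF ln_add_one_self_le_self[OF z] assms(3)] by linarith
  also have "\<dots> \<le> exp (- \<alpha> * ln (1 + d / X))"
    using exp_ge_add_one_self[of "- \<alpha> * ln (1 + d / X)"] by simp
  also have "\<dots> = (1 + d / X) powr (- \<alpha>)"
    using z by (simp add: powr_def)
  finally have "X powr (- \<alpha>) * (1 - \<alpha> * (d / X)) \<le> X powr (- \<alpha>) * (1 + d / X) powr (- \<alpha>)"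
    by (intro mult_left_mono) auto
  also have "\<dots> = (X * (1 + d / X)) powr (- \<alpha>)"
    using assms z by (simp add: powr_mult)
  also have "X * (1 + d / X) = X + d"
    using assms by (simp add: field_simps)
  finally show ?thesis by (simp add: algebra_simps)
qed

lemma Gamma_two_minus:
  fixes \<alpha> :: real
  assumes "\<alpha> < 1"
  shows "Gamma (2 - \<alpha>) = (1 - \<alpha>) * Gamma (1 - \<alpha>)"
proof -
  have "1 - \<alpha> \<notin> \<int>\<^sub>\<le>\<^sub>0" using assms nonpos_Ints_nonpos by fastforce
  then show ?thesis using Gamma_plus1[of "1 - \<alpha>"] by (simp add: algebra_simps)
qed

lemma has_integral_real_derivative:
  fixes F f :: "real \<Rightarrow> real"
  assumes "a \<le> b" "\<And>x. x \<in> {a..b} \<Longrightarrow> (F has_real_derivative f x) (at x)"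
  shows "(f has_integral (F b - F a)) {a..b}"
  using assms has_real_derivative_iff_has_vector_derivative has_vector_derivative_at_within
  by (intro fundamental_theorem_of_calculus) blast+

lemma has_integral_centered_quadratic:
  fixes x y c0 c1 c2 :: real
  assumes "x \<le> y"
  defines "m \<equiv> (x + y) / 2"
  shows "((\<lambda>s. c0 + c1 * (s - m) + c2 * (s - m)\<^sup>2) has_integral c0 * (y - x) + c2 * (y - x) ^ 3 / 12) {x..y}"
proof -
  let ?F = "\<lambda>s. c0 * s + c1 * (s - m)\<^sup>2 / 2 + c2 * (s - m) ^ 3 / 3"
  have "((\<lambda>s. c0 + c1 * (s - m) + c2 * (s - m)\<^sup>2) has_integral ?F y - ?F x) {x..y}"
    by (rule has_integral_real_derivative[OF assms(1)])
      (auto intro!: derivative_eq_intros simp: power2_eq_square power3_eq_cube field_simps)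
  moreover have "?F y - ?F x = c0 * (y - x) + c2 * (y - x) ^ 3 / 12"
    unfolding m_def by (simp add: power2_eq_square power3_eq_cube field_simps)
  ultimately show ?thesis by simp
qed

lemma convex_on_slope_mono:
  fixes f :: "real \<Rightarrow> real"
  assumes f: "convex_on I f" and I: "convex I" "u \<in> I" "z \<in> I"
    and ord: "u < v" "v \<le> y" "y < z"
  shows "(f v - f u) / (v - u) \<le> (f z - f y) / (z - y)"
proof -
  have "{u..z} \<subseteq> I"
    using atMostAtLeast_subset_convex[OF I] ord by simp
  then have "v \<in> I" using ord by auto
  have swap: "(f p - f q) / (p - q) = (f q - f p) / (q - p)" for p q
    by (simp add: divide_simps) (simp add: algebra_simps)
  have "(f v - f u) / (v - u) \<le> (f v - f z) / (v - z)"
    using convex_on_slope_le[OF f I(2,3), of v] ord by (smt (verit) swap)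
  also have "\<dots> \<le> (f z - f y) / (z - y)"
    using convex_on_slope_le(2)[OF f \<open>v \<in> I\<close> I(3), of y] ord swap[of y z]
    by (cases "v = y") auto
  finally show ?thesis .
qed

section \<open>The kernel \<open>(S - s) powr (- \<alpha>)\<close> and its cell integrals\<close>

definition frac_kernel :: "real \<Rightarrow> real \<Rightarrow> real \<Rightarrow> real" where
  "frac_kernel \<alpha> S s = (S - s) powr (- \<alpha>)"

definition frac_kernel_mass :: "real \<Rightarrow> real \<Rightarrow> real \<Rightarrow> real \<Rightarrow> real" where
  "frac_kernel_mass \<alpha> S x y = integral {x..y} (frac_kernel \<alpha> S)"

definition frac_kernel_moment :: "real \<Rightarrow> real \<Rightarrow> real \<Rightarrow> real \<Rightarrow> real" where
  "frac_kernel_moment \<alpha> S x y = integral {x..y} (\<lambda>s. frac_kernel \<alpha> S s * (s - (x + y) / 2))"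

lemma frac_kernel_pos: "s < S \<Longrightarrow> 0 < frac_kernel \<alpha> S s"
  by (simp add: frac_kernel_def)

lemma frac_kernel_mono: "0 \<le> \<alpha> \<Longrightarrow> s \<le> s' \<Longrightarrow> s' < S \<Longrightarrow> frac_kernel \<alpha> S s \<le> frac_kernel \<alpha> S s'"
  unfolding frac_kernel_def by (rule powr_mono2') auto

lemma convex_on_frac_kernel:
  assumes "0 \<le> \<alpha>"
  shows "convex_on {..<S} (frac_kernel \<alpha> S)"
proof (rule convex_on_realI[where f' = "\<lambda>s. \<alpha> * (S - s) powr (- \<alpha> - 1)"])
  fix s assume "s \<in> {..<S}"
  then show "(frac_kernel \<alpha> S has_real_derivative \<alpha> * (S - s) powr (- \<alpha> - 1)) (at s)"
    unfolding frac_kernel_def[abs_def] by (auto intro!: derivative_eq_intros)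
next
  fix x y assume "x \<in> {..<S}" "y \<in> {..<S}" "x \<le> y"
  then show "\<alpha> * (S - x) powr (- \<alpha> - 1) \<le> \<alpha> * (S - y) powr (- \<alpha> - 1)"
    using assms by (intro mult_left_mono powr_mono2') auto
qed simp

lemma has_integral_frac_kernel:
  assumes "x \<le> y" "y < S" "\<alpha> < 1"
  shows "(frac_kernel \<alpha> S has_integral ((S - x) powr (1 - \<alpha>) - (S - y) powr (1 - \<alpha>)) / (1 - \<alpha>)) {x..y}"
proof -
  let ?F = "\<lambda>s. - ((S - s) powr (1 - \<alpha>)) / (1 - \<alpha>)"
  have "(frac_kernel \<alpha> S has_integral ?F y - ?F x) {x..y}"
  proof (rule has_integral_real_derivative[OF assms(1)])
    fix s assume "s \<in> {x..y}"
    then have "0 < S - s" using assms by auto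
    then show "(?F has_real_derivative frac_kernel \<alpha> S s) (at s)"
      unfolding frac_kernel_def using assms(3) by (auto intro!: derivative_eq_intros)
  qed
  then show ?thesis by (simp add: diff_divide_distrib)
qed

lemma has_integral_frac_kernel_centered:
  assumes "x \<le> y" "y < S" "\<alpha> < 1"
  defines "A \<equiv> S - x" and "B \<equiv> S - y"
  shows "((\<lambda>s. frac_kernel \<alpha> S s * (s - (x + y) / 2)) has_integral
     (A + B) / 2 * (A powr (1 - \<alpha>) - B powr (1 - \<alpha>)) / (1 - \<alpha>)
       - (A powr (2 - \<alpha>) - B powr (2 - \<alpha>)) / (2 - \<alpha>)) {x..y}"
proof -
  let ?F = "\<lambda>s. (S - s) powr (2 - \<alpha>) / (2 - \<alpha>) - (A + B) / 2 * (S - s) powr (1 - \<alpha>) / (1 - \<alpha>)"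
  have "((\<lambda>s. frac_kernel \<alpha> S s * (s - (x + y) / 2)) has_integral ?F y - ?F x) {x..y}"
  proof (rule has_integral_real_derivative[OF assms(1)])
    fix s assume "s \<in> {x..y}"
    then have s: "0 < S - s" using assms by auto
    have "(?F has_real_derivative (A + B) / 2 * (S - s) powr (- \<alpha>) - (S - s) powr (1 - \<alpha>)) (at s)"
      using s assms(3) by (auto intro!: derivative_eq_intros) (simp add: field_simps)
    moreover have "(A + B) / 2 * (S - s) powr (- \<alpha>) - (S - s) powr (1 - \<alpha>)
        = frac_kernel \<alpha> S s * (s - (x + y) / 2)"
      using powr_mult_base[of "S - s" "- \<alpha>"] s
      unfolding frac_kernel_def A_def B_def by (simp add: field_simps)
    ultimately show "(?F has_real_derivative frac_kernel \<alpha> S s * (s - (x + y) / 2)) (at s)"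
      by simp
  qed
  moreover have "?F y - ?F x = (A + B) / 2 * (A powr (1 - \<alpha>) - B powr (1 - \<alpha>)) / (1 - \<alpha>)
       - (A powr (2 - \<alpha>) - B powr (2 - \<alpha>)) / (2 - \<alpha>)"
    unfolding A_def[symmetric] B_def[symmetric] by (simp add: diff_divide_distrib algebra_simps)
  ultimately show ?thesis by simp
qed

lemma frac_kernel_mass_eq:
  assumes "x \<le> y" "y < S" "\<alpha> < 1"
  shows "frac_kernel_mass \<alpha> S x y = ((S - x) powr (1 - \<alpha>) - (S - y) powr (1 - \<alpha>)) / (1 - \<alpha>)"
  unfolding frac_kernel_mass_def using has_integral_frac_kernel[OF assms] by (rule integral_unique)

lemma frac_kernel_moment_eq:
  assumes "x \<le> y" "y < S" "\<alpha> < 1"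
  defines "A \<equiv> S - x" and "B \<equiv> S - y"
  shows "frac_kernel_moment \<alpha> S x y = (A + B) / 2 * (A powr (1 - \<alpha>) - B powr (1 - \<alpha>)) / (1 - \<alpha>)
       - (A powr (2 - \<alpha>) - B powr (2 - \<alpha>)) / (2 - \<alpha>)"
  unfolding frac_kernel_moment_def A_def B_def
  using has_integral_frac_kernel_centered[OF assms(1-3)] by (rule integral_unique)

lemma has_integral_frac_kernel_mass:
  assumes "x \<le> y" "y < S" "\<alpha> < 1"
  shows "(frac_kernel \<alpha> S has_integral frac_kernel_mass \<alpha> S x y) {x..y}"
  using has_integral_frac_kernel[OF assms] frac_kernel_mass_eq[OF assms] by simp

lemma has_integral_frac_kernel_moment:
  assumes "x \<le> y" "y < S" "\<alpha> < 1"
  shows "((\<lambda>s. frac_kernel \<alpha> S s * (s - (x + y) / 2)) has_integral frac_kernel_moment \<alpha> S x y) {x..y}"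
  using has_integral_frac_kernel_centered[OF assms] frac_kernel_moment_eq[OF assms] by simp

lemma frac_kernel_mass_le:
  assumes "x \<le> y" "y < S" "0 \<le> \<alpha>" "\<alpha> < 1"
  shows "frac_kernel_mass \<alpha> S x y \<le> frac_kernel \<alpha> S y * (y - x)"
  using has_integral_le[OF has_integral_frac_kernel_mass[OF assms(1,2,4)]
      has_integral_const_real[of "frac_kernel \<alpha> S y" x y]] frac_kernel_mono[OF assms(3)] assms
  by (auto simp: mult.commute)

lemma has_integral_frac_kernel_tent:
  assumes "x \<le> y" "y < S" "\<alpha> < 1"
  shows "((\<lambda>s. frac_kernel \<alpha> S s * (1 - 2 / D * (s - (x + y) / 2))) has_integral
           frac_kernel_mass \<alpha> S x y - 2 / D * frac_kernel_moment \<alpha> S x y) {x..y}"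
proof -
  have "(\<lambda>s. frac_kernel \<alpha> S s * (1 - 2 / D * (s - (x + y) / 2)))
      = (\<lambda>s. frac_kernel \<alpha> S s - 2 / D * (frac_kernel \<alpha> S s * (s - (x + y) / 2)))"
    by (cases "D = 0") (simp_all add: fun_eq_iff field_simps)
  then show ?thesis
    using has_integral_diff[OF has_integral_frac_kernel_mass[OF assms]
        has_integral_mult_right[OF has_integral_frac_kernel_moment[OF assms], of "2 / D"]]
    by simp
qed

lemma tent_weight_nonneg:
  fixes x y s D :: real
  assumes "s \<in> {x..y}" "y - x \<le> D"
  shows "0 \<le> 1 - 2 / D * (s - (x + y) / 2)"
proof (cases "D \<le> 0")
  case True
  then have "s = x" "y = x" using assms by auto
  then show ?thesis by simp
next
  case False
  have "2 * (s - (x + y) / 2) \<le> D" using assms by (auto simp: field_simps)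
  then show ?thesis using False by (simp add: field_simps)
qed

lemma frac_kernel_moment_nonneg:
  assumes "x \<le> y" "y < S" "0 \<le> \<alpha>" "\<alpha> < 1"
  shows "0 \<le> frac_kernel_moment \<alpha> S x y"
proof (rule has_integral_le[OF _ has_integral_frac_kernel_moment[OF assms(1,2,4)]])
  let ?m = "(x + y) / 2"
  show "((\<lambda>s. 0 + frac_kernel \<alpha> S ?m * (s - ?m) + 0 * (s - ?m)\<^sup>2) has_integral 0) {x..y}"
    using has_integral_centered_quadratic[OF assms(1), of 0 "frac_kernel \<alpha> S ?m" 0] by simp
  fix s assume s: "s \<in> {x..y}"
  have "frac_kernel \<alpha> S ?m * (s - ?m) \<le> frac_kernel \<alpha> S s * (s - ?m)"
  proof (cases "s \<le> ?m")
    case True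
    then show ?thesis using frac_kernel_mono[OF assms(3), of s ?m S] assms
      by (intro mult_right_mono_neg) auto
  next
    case False
    then show ?thesis using frac_kernel_mono[OF assms(3), of ?m s S] assms s
      by (intro mult_right_mono) auto
  qed
  then show "0 + frac_kernel \<alpha> S ?m * (s - ?m) + 0 * (s - ?m)\<^sup>2 \<le> frac_kernel \<alpha> S s * (s - ?m)"
    by simp
qed

lemma frac_kernel_tent_lower:
  assumes "x \<le> y" "y < S" "0 \<le> \<alpha>" "\<alpha> < 1" "y - x \<le> D"
  shows "frac_kernel \<alpha> S x * (y - x) \<le> frac_kernel_mass \<alpha> S x y - 2 / D * frac_kernel_moment \<alpha> S x y"
proof (rule has_integral_le[OF _ has_integral_frac_kernel_tent[OF assms(1,2,4)]])
  let ?m = "(x + y) / 2" and ?K = "frac_kernel \<alpha> S x"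
  show "((\<lambda>s. ?K + (- 2 / D * ?K) * (s - ?m) + 0 * (s - ?m)\<^sup>2) has_integral ?K * (y - x)) {x..y}"
    using has_integral_centered_quadratic[OF assms(1), of ?K "- 2 / D * ?K" 0] by simp
  fix s assume s: "s \<in> {x..y}"
  have "?K * (1 - 2 / D * (s - ?m)) \<le> frac_kernel \<alpha> S s * (1 - 2 / D * (s - ?m))"
    using frac_kernel_mono[OF assms(3), of x s S] tent_weight_nonneg[OF s assms(5)] s assms
    by (intro mult_right_mono) auto
  moreover have "?K + (- 2 / D * ?K) * (s - ?m) + 0 * (s - ?m)\<^sup>2 = ?K * (1 - 2 / D * (s - ?m))"
    by (cases "D = 0") (simp_all add: field_simps)
  ultimately show "?K + (- 2 / D * ?K) * (s - ?m) + 0 * (s - ?m)\<^sup>2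
      \<le> frac_kernel \<alpha> S s * (1 - 2 / D * (s - ?m))"
    by linarith
qed

text \<open>By convexity the kernel lies below its chord on the cell.\<close>

lemma frac_kernel_tent_upper:
  assumes "x < y" "y < S" "0 \<le> \<alpha>" "\<alpha> < 1" "y - x \<le> D"
  shows "frac_kernel_mass \<alpha> S x y - 2 / D * frac_kernel_moment \<alpha> S x y
      \<le> (frac_kernel \<alpha> S x + frac_kernel \<alpha> S y) / 2 * (y - x)"
proof -
  let ?m = "(x + y) / 2" and ?K = "frac_kernel \<alpha> S" and ?d = "y - x"
  define L where "L = (?K y - ?K x) / ?d"
  let ?c0 = "?K x + L * ?d / 2" and ?c1 = "L - 2 / D * (?K x + L * ?d / 2)" and ?c2 = "- 2 * L / D"
  have D: "0 < D" and L: "0 \<le> L"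
    using assms frac_kernel_mono[OF assms(3), of x y S] by (auto simp: L_def)
  have "frac_kernel_mass \<alpha> S x y - 2 / D * frac_kernel_moment \<alpha> S x y \<le> ?c0 * ?d + ?c2 * ?d ^ 3 / 12"
  proof (rule has_integral_le[OF has_integral_frac_kernel_tent has_integral_centered_quadratic])
    fix s assume s: "s \<in> {x..y}"
    have "convex_on {x..y} ?K"
      by (rule convex_on_subset[OF convex_on_frac_kernel[OF assms(3)]]) (use assms in auto)
    then have "?K s \<le> ?K x + L * (s - x)"
      using convex_onD_Icc'[of x y ?K s] s assms unfolding L_def by simp
    then have "?K s * (1 - 2 / D * (s - ?m)) \<le> (?K x + L * (s - x)) * (1 - 2 / D * (s - ?m))"
      using tent_weight_nonneg[OF s assms(5)] by (rule mult_right_mono)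
    also have "\<dots> = ?c0 + ?c1 * (s - ?m) + ?c2 * (s - ?m)\<^sup>2"
      using D by (simp add: field_simps power2_eq_square)
    finally show "?K s * (1 - 2 / D * (s - ?m)) \<le> ?c0 + ?c1 * (s - ?m) + ?c2 * (s - ?m)\<^sup>2" .
  qed (use assms in auto)
  also have "\<dots> = ?K x * ?d + L * ?d\<^sup>2 / 2 - L * ?d ^ 3 / (6 * D)"
    using D by (simp add: field_simps power2_eq_square power3_eq_cube)
  also have "\<dots> \<le> ?K x * ?d + L * ?d\<^sup>2 / 2"
    using D L assms by simp
  also have "\<dots> = (?K x + ?K y) / 2 * ?d"
    using assms by (simp add: L_def field_simps power2_eq_square)
  finally show ?thesis .
qed

lemma frac_kernel_moment_le_slope:
  assumes "x < y" "y < z" "z < S" "0 \<le> \<alpha>" "\<alpha> < 1"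
  defines "L \<equiv> (frac_kernel \<alpha> S z - frac_kernel \<alpha> S y) / (z - y)"
  shows "frac_kernel_moment \<alpha> S x y \<le> L * (y - x) ^ 3 / 12"
proof -
  let ?m = "(x + y) / 2" and ?K = "frac_kernel \<alpha> S"
  have slope: "(?K v - ?K u) / (v - u) \<le> L" if "x \<le> u" "u < v" "v \<le> y" for u v
    unfolding L_def using that assms
    by (intro convex_on_slope_mono[OF convex_on_frac_kernel[OF assms(4)]]) auto
  have "frac_kernel_moment \<alpha> S x y \<le> 0 * (y - x) + L * (y - x) ^ 3 / 12"
  proof (rule has_integral_le[OF has_integral_frac_kernel_moment has_integral_centered_quadratic])
    fix s assume s: "s \<in> {x..y}"
    have "(?K s - ?K ?m) * (s - ?m) \<le> L * (s - ?m)\<^sup>2"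
    proof (cases s ?m rule: linorder_cases)
      case less
      then have "?K ?m - ?K s \<le> L * (?m - s)"
        using slope[of s ?m] s by (simp add: divide_simps)
      then have "(?K ?m - ?K s) * (?m - s) \<le> L * (?m - s) * (?m - s)"
        using less by (intro mult_right_mono) auto
      then show ?thesis
        by (metis minus_diff_eq minus_mult_minus power2_commute power2_eq_square mult.assoc)
    next
      case greater
      then have "?K s - ?K ?m \<le> L * (s - ?m)"
        using slope[of ?m s] s by (simp add: divide_simps)
      then have "(?K s - ?K ?m) * (s - ?m) \<le> L * (s - ?m) * (s - ?m)"
        using greater by (intro mult_right_mono) auto
      then show ?thesis by (simp add: power2_eq_square)
    next
      case equal
      then have "s - ?m = 0" by simp
      then show ?thesis by (simp only:) simp
    qed
    then show "?K s * (s - ?m) \<le> 0 + ?K ?m * (s - ?m) + L * (s - ?m)\<^sup>2"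
      by (simp add: algebra_simps)
  qed (use assms in auto)
  then show ?thesis by simp
qed

section \<open>Riesz coefficients\<close>

lemma gR_0 [simp]: "gR \<beta> 0 = 1"
  by (simp add: gR_def)

lemma gR_Suc: "gR \<beta> (Suc k) = gR \<beta> k * ((real k - \<beta>) / (real k + 1))"
proof -
  have "(real k + 1) * (\<beta> gchoose Suc k) = (\<beta> - real k) * (\<beta> gchoose k)"
    using gbinomial_mult_1[of \<beta> k] by (simp add: algebra_simps)
  then have c: "\<beta> gchoose Suc k = (\<beta> - real k) * (\<beta> gchoose k) / (real k + 1)"
    by (simp add: field_simps)
  have "gR \<beta> (Suc k) = - ((-1) ^ k * (\<beta> gchoose Suc k))"
    unfolding gR_def by simp
  also have "\<dots> = (-1) ^ k * (\<beta> gchoose k) * ((real k - \<beta>) / (real k + 1))"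
    unfolding c by (simp add: field_simps)
  finally show ?thesis unfolding gR_def .
qed

lemma gR_1 [simp]: "gR \<beta> 1 = - \<beta>" "gR \<beta> (Suc 0) = - \<beta>"
  using gR_Suc[of \<beta> 0] by simp_all

lemma gR_2: "gR \<beta> 2 = \<beta> * (\<beta> - 1) / 2"
  using gR_Suc[of \<beta> 1] by (simp add: numeral_2_eq_2 field_simps)

lemma gR_pos:
  assumes "1 < \<beta>" "\<beta> < 2" "2 \<le> k"
  shows "0 < gR \<beta> k"
  using assms(3)
proof (induction k rule: nat_induct_at_least)
  case base
  then show ?case using assms by (simp add: gR_2)
next
  case (Suc k)
  then show ?case using assms by (simp add: gR_Suc)
qed

definition gR_sum :: "real \<Rightarrow> nat \<Rightarrow> real" where
  "gR_sum \<beta> n = (\<Sum>k\<le>n. gR \<beta> k)"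

lemma gR_sum_eq_prod: "gR_sum \<beta> n = (\<Prod>j=1..n. 1 - \<beta> / real j)"
proof -
  have "gR_sum \<beta> n = (\<Prod>j=1..n. 1 - \<beta> / real j)
      \<and> gR \<beta> (Suc n) = - \<beta> / (real n + 1) * (\<Prod>j=1..n. 1 - \<beta> / real j)"
  proof (induction n)
    case 0
    then show ?case by (simp add: gR_sum_def)
  next
    case (Suc n)
    define P where "P = (\<Prod>j=1..n. 1 - \<beta> / real j)"
    have P: "(\<Prod>j=1..Suc n. 1 - \<beta> / real j) = P * (1 - \<beta> / (real n + 1))"
      unfolding P_def by (simp add: add.commute)
    have "gR_sum \<beta> (Suc n) = P - \<beta> / (real n + 1) * P"
      using Suc.IH unfolding P_def by (simp add: gR_sum_def)
    moreover have "gR \<beta> (Suc (Suc n)) = - \<beta> / (real n + 1) * P * ((real n + 1 - \<beta>) / (real n + 2))"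
      using Suc.IH unfolding P_def gR_Suc[of \<beta> "Suc n"] by (simp add: add.commute)
    ultimately show ?case
      unfolding P by (simp add: field_simps)
  qed
  then show ?thesis ..
qed

lemma gR_sum_Suc: "gR_sum \<beta> (Suc n) = gR_sum \<beta> n * (1 - \<beta> / (real n + 1))"
  by (simp add: gR_sum_eq_prod add.commute)

lemma gR_sum_neg:
  assumes "1 < \<beta>" "\<beta> < 2" "1 \<le> n"
  shows "gR_sum \<beta> n < 0"
  using assms(3)
proof (induction n rule: nat_induct_at_least)
  case base
  then show ?case using assms by (simp add: gR_sum_eq_prod)
next
  case (Suc n)
  have "0 < 1 - \<beta> / (real n + 1)" using Suc assms by (simp add: field_simps)
  then show ?case using Suc.IH by (simp add: gR_sum_Suc mult_neg_pos)
qed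

lemma gR_sum_mono:
  assumes "1 < \<beta>" "\<beta> < 2" "1 \<le> n" "n \<le> m"
  shows "gR_sum \<beta> n \<le> gR_sum \<beta> m"
  using assms(4)
proof (induction m rule: dec_induct)
  case (step m)
  have "gR_sum \<beta> m \<le> gR_sum \<beta> m * (1 - \<beta> / (real m + 1))"
    using gR_sum_neg[OF assms(1,2), of m] step assms by (intro mult_le_cancel_left1[THEN iffD2]) auto
  then show ?case using step.IH by (simp add: gR_sum_Suc)
qed simp

lemma PsiR_neg:
  assumes "1 < \<beta>" "\<beta> < 2"
  shows "PsiR \<beta> < 0"
proof -
  have "cos (pi * \<beta> / 2) < 0"
    using assms pi_gt_zero by (intro cos_lt_zero_pi) (auto simp: field_simps)
  then show ?thesis unfolding PsiR_def by (simp add: divide_neg_pos)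
qed

lemma rR_0_pos:
  assumes "1 < \<beta>" "\<beta> < 2"
  shows "0 < rR \<beta> 0"
proof -
  have "rR \<beta> 0 = PsiR \<beta> * ((1 - \<beta>) * (2 + \<beta>))"
    by (simp add: rR_def field_simps)
  moreover have "(1 - \<beta>) * (2 + \<beta>) < 0" using assms by (simp add: mult_neg_pos)
  ultimately show ?thesis
    using PsiR_neg[OF assms] by (simp add: mult_neg_neg)
qed

lemma rR_nonpos:
  assumes "1 < \<beta>" "\<beta> < 2" "1 \<le> k"
  shows "rR \<beta> k \<le> 0"
proof -
  have "\<beta> / 2 * gR \<beta> 0 + (2 - \<beta>) / 2 * gR \<beta> 1 + \<beta> / 2 * gR \<beta> 2 = \<beta> * (\<beta> - 1) * (\<beta> + 2) / 4"
    by (simp add: gR_2 field_simps)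
  moreover have "0 \<le> \<beta> * (\<beta> - 1) * (\<beta> + 2) / 4" using assms by simp
  ultimately have "0 \<le> \<beta> / 2 * gR \<beta> 0 + (2 - \<beta>) / 2 * gR \<beta> 1 + \<beta> / 2 * gR \<beta> 2"
    by linarith
  moreover have "0 \<le> \<beta> / 2 * gR \<beta> (k + 1) + (2 - \<beta>) / 2 * gR \<beta> k" if "2 \<le> k"
    using gR_pos[OF assms(1,2), of k] gR_pos[OF assms(1,2), of "k + 1"] that assms by simp
  ultimately show ?thesis
    using PsiR_neg[OF assms(1,2)] assms(3) unfolding rR_def by (auto simp: mult_nonpos_nonneg)
qed

definition rR_sum :: "real \<Rightarrow> nat \<Rightarrow> real" where
  "rR_sum \<beta> q = (\<Sum>d=1..q. rR \<beta> d)"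

lemma rR_sum_eq:
  assumes "1 \<le> q"
  shows "rR_sum \<beta> q = PsiR \<beta> * (\<beta> / 2 * gR_sum \<beta> (q + 1) + (2 - \<beta>) / 2 * gR_sum \<beta> q) - rR \<beta> 0 / 2"
  using assms
proof (induction q rule: nat_induct_at_least)
  case base
  have g1: "gR_sum \<beta> 1 = 1 - \<beta>"
    using gR_sum_Suc[of \<beta> 0] by (simp add: gR_sum_def)
  have g2: "gR_sum \<beta> 2 = (1 - \<beta>) * (1 - \<beta> / 2)"
    using gR_sum_Suc[of \<beta> 1] g1 by (simp add: numeral_2_eq_2)
  have r1: "rR_sum \<beta> 1 = PsiR \<beta> * (\<beta> / 2 + (2 - \<beta>) / 2 * (- \<beta>) + \<beta> / 2 * gR \<beta> 2)"
    by (simp add: rR_sum_def rR_def)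
  have "(1::nat) + 1 = 2" by simp
  then show ?case unfolding r1 g1 by (simp add: rR_def gR_2 g2 g2[unfolded numeral_2_eq_2] field_simps)
next
  case (Suc q)
  then show ?case by (simp add: rR_sum_def rR_def gR_sum_def field_simps)
qed

lemma rR_sum_ge:
  assumes "1 < \<beta>" "\<beta> < 2" "1 \<le> q" "q + 1 \<le> M"
  shows "PsiR \<beta> * gR_sum \<beta> M - rR \<beta> 0 / 2 \<le> rR_sum \<beta> q"
proof -
  have "PsiR \<beta> * gR_sum \<beta> M = PsiR \<beta> * (\<beta> / 2 * gR_sum \<beta> M + (2 - \<beta>) / 2 * gR_sum \<beta> M)"
    by (simp add: field_simps)
  also have "\<dots> \<le> PsiR \<beta> * (\<beta> / 2 * gR_sum \<beta> (q + 1) + (2 - \<beta>) / 2 * gR_sum \<beta> q)"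
    using PsiR_neg[OF assms(1,2)] gR_sum_mono[OF assms(1,2), of "q + 1" M] gR_sum_mono[OF assms(1,2), of q M] assms
    by (intro mult_left_mono_neg add_mono mult_left_mono) auto
  finally show ?thesis unfolding rR_sum_eq[OF assms(3)] by simp
qed

lemma rZ_row_sum_eq:
  assumes "1 \<le> j" "j \<le> M - 1"
  shows "(\<Sum>k=1..M-1. rZ \<beta> (int j - int k)) = rR \<beta> 0 + rR_sum \<beta> (j - 1) + rR_sum \<beta> (M - 1 - j)"
proof -
  have M: "M - 1 = j + (M - 1 - j)" using assms by simp
  have "(\<Sum>k=1..j. rZ \<beta> (int j - int k)) = (\<Sum>k=1..j. rR \<beta> (k - 1))"
    by (subst sum.atLeastAtMost_rev) (auto intro!: sum.cong simp: rZ_def of_nat_diff nat_diff_distrib)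
  also have "\<dots> = (\<Sum>d=0..j-1. rR \<beta> d)"
    using sum.shift_bounds_cl_nat_ivl[of "\<lambda>k. rR \<beta> (k - 1)" 0 1 "j - 1"] assms by simp
  also have "\<dots> = rR \<beta> 0 + rR_sum \<beta> (j - 1)"
    unfolding rR_sum_def by (simp add: sum.atLeast_Suc_atMost)
  finally have left: "(\<Sum>k=1..j. rZ \<beta> (int j - int k)) = rR \<beta> 0 + rR_sum \<beta> (j - 1)" .
  have "(\<Sum>k=1+j..(M-1-j)+j. rZ \<beta> (int j - int k)) = (\<Sum>d=1..M-1-j. rZ \<beta> (int j - int (d + j)))"
    by (rule sum.shift_bounds_cl_nat_ivl)
  also have "\<dots> = rR_sum \<beta> (M - 1 - j)"
    unfolding rR_sum_def by (rule sum.cong) (auto simp: rZ_def)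
  finally have right: "(\<Sum>k=j+1..j+(M-1-j). rZ \<beta> (int j - int k)) = rR_sum \<beta> (M - 1 - j)"
    by (simp add: add.commute)
  show ?thesis
    using sum.ub_add_nat[of 1 j "\<lambda>k. rZ \<beta> (int j - int k)" "M - 1 - j"] assms left right M by simp
qed

lemma rZ_row_sum_ge:
  assumes "1 < \<beta>" "\<beta> < 2" "3 \<le> M" "1 \<le> j" "j \<le> M - 1"
  shows "PsiR \<beta> * gR_sum \<beta> M \<le> (\<Sum>k=1..M-1. rZ \<beta> (int j - int k))"
proof -
  let ?lam = "PsiR \<beta> * gR_sum \<beta> M" and ?r0 = "rR \<beta> 0"
  have \<lambda>: "0 < ?lam"
    using PsiR_neg[OF assms(1,2)] gR_sum_neg[OF assms(1,2), of M] assms by (simp add: mult_neg_neg)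
  have tail: "?lam - ?r0 / 2 \<le> rR_sum \<beta> q" if "1 \<le> q" "q + 2 \<le> M" for q
    using rR_sum_ge[OF assms(1,2) that(1)] that by simp
  have "?lam \<le> ?r0 + rR_sum \<beta> (j - 1) + rR_sum \<beta> (M - 1 - j)"
  proof (cases "j = 1 \<or> j = M - 1")
    case True
    then have "?lam - ?r0 / 2 \<le> rR_sum \<beta> (j - 1) + rR_sum \<beta> (M - 1 - j)"
      using tail[of "M - 1 - j"] tail[of "j - 1"] assms by (auto simp: rR_sum_def)
    then show ?thesis using rR_0_pos[OF assms(1,2)] by simp
  next
    case False
    have "?lam - ?r0 / 2 \<le> rR_sum \<beta> (j - 1)" "?lam - ?r0 / 2 \<le> rR_sum \<beta> (M - 1 - j)"
      by (rule tail, use False assms in auto)+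
    then show ?thesis using \<lambda> by simp
  qed
  then show ?thesis unfolding rZ_row_sum_eq[OF assms(4,5)] .
qed

lemma quadratic_form_ge_row_sums:
  fixes A :: "nat \<Rightarrow> nat \<Rightarrow> real" and v :: "nat \<Rightarrow> real"
  assumes "finite I" and sym: "\<And>j k. A j k = A k j" and off_diag: "\<And>j k. j \<noteq> k \<Longrightarrow> A j k \<le> 0"
  shows "(\<Sum>j\<in>I. (\<Sum>k\<in>I. A j k) * (v j)\<^sup>2) \<le> (\<Sum>j\<in>I. \<Sum>k\<in>I. A j k * v k * v j)"
proof -
  define E where "E = (\<Sum>j\<in>I. \<Sum>k\<in>I. A j k * v j * (v k - v j))"
  have "(\<Sum>j\<in>I. \<Sum>k\<in>I. A j k * v k * v j) - (\<Sum>j\<in>I. (\<Sum>k\<in>I. A j k) * (v j)\<^sup>2)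
      = (\<Sum>j\<in>I. \<Sum>k\<in>I. A j k * v k * v j - A j k * (v j)\<^sup>2)"
    by (simp add: sum_subtractf sum_distrib_right)
  also have "\<dots> = E"
    unfolding E_def by (intro sum.cong refl) (simp add: power2_eq_square algebra_simps)
  finally have E_eq: "(\<Sum>j\<in>I. \<Sum>k\<in>I. A j k * v k * v j) - (\<Sum>j\<in>I. (\<Sum>k\<in>I. A j k) * (v j)\<^sup>2) = E" .
  have "E = (\<Sum>j\<in>I. \<Sum>k\<in>I. A j k * v k * (v j - v k))"
    unfolding E_def by (subst sum.swap) (simp add: sym)
  then have "2 * E = (\<Sum>j\<in>I. \<Sum>k\<in>I. A j k * v j * (v k - v j) + A j k * v k * (v j - v k))"
    unfolding E_def by (simp add: sum.distrib)
  also have "\<dots> = (\<Sum>j\<in>I. \<Sum>k\<in>I. - A j k * (v j - v k)\<^sup>2)"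
    by (intro sum.cong refl) (simp add: power2_eq_square algebra_simps)
  also have "\<dots> \<ge> 0"
  proof (intro sum_nonneg)
    fix j k
    show "0 \<le> - A j k * (v j - v k)\<^sup>2"
      using off_diag[of j k] by (cases "j = k") (auto simp: mult_nonpos_nonneg)
  qed
  finally show ?thesis using E_eq by simp
qed

lemma exp_le_one_minus:
  fixes x :: real
  assumes "0 \<le> x" "x \<le> 1 / 2"
  shows "exp (- x - x\<^sup>2) \<le> 1 - x"
proof -
  define f where "f = (\<lambda>t::real. ln (1 - t) + t + t\<^sup>2)"
  have "f 0 \<le> f x"
  proof (rule DERIV_nonneg_imp_nondecreasing[OF assms(1)])
    fix t assume t: "0 \<le> t" "t \<le> x"
    then have "(f has_real_derivative (- 1 / (1 - t) + 1 + 2 * t)) (at t)"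
      unfolding f_def using assms by (auto intro!: derivative_eq_intros simp: field_simps)
    moreover have "1 \<le> (1 + 2 * t) * (1 - t)"
      using t assms mult_nonneg_nonneg[of t "1 - 2 * t"] by (simp add: algebra_simps)
    then have "1 / (1 - t) \<le> 1 + 2 * t"
      using t assms by (simp add: divide_le_eq)
    then have "0 \<le> - 1 / (1 - t) + 1 + 2 * t" by simp
    ultimately show "\<exists>y. DERIV f t :> y \<and> 0 \<le> y" by blast
  qed
  then have "- x - x\<^sup>2 \<le> ln (1 - x)" unfolding f_def by simp
  then show ?thesis using assms by (simp add: ln_ge_iff)
qed

lemma prod_one_minus_ge_exp:
  fixes \<beta> :: real
  assumes "0 \<le> \<beta>" "\<beta> \<le> 2" "3 \<le> M"
  shows "exp (- (\<beta> * (\<Sum>j=4..M. 1 / real j) + \<beta>\<^sup>2 * (\<Sum>j=4..M. 1 / (real j)\<^sup>2)))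
       \<le> (\<Prod>j=4..M. 1 - \<beta> / real j)"
  using assms(3)
proof (induction M rule: nat_induct_at_least)
  case (Suc M)
  let ?x = "\<beta> / real (Suc M)" and ?E = "\<beta> * (\<Sum>j=4..M. 1 / real j) + \<beta>\<^sup>2 * (\<Sum>j=4..M. 1 / (real j)\<^sup>2)"
  have x: "0 \<le> ?x" "?x \<le> 1 / 2" using assms Suc.hyps by (auto simp: field_simps)
  have "exp (- (\<beta> * (\<Sum>j=4..Suc M. 1 / real j) + \<beta>\<^sup>2 * (\<Sum>j=4..Suc M. 1 / (real j)\<^sup>2)))
      = exp (- ?E) * exp (- ?x - ?x\<^sup>2)"
    using Suc.hyps by (simp add: algebra_simps power_divide flip: exp_add)
  also have "\<dots> \<le> (\<Prod>j=4..M. 1 - \<beta> / real j) * (1 - ?x)"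
    using Suc.IH exp_le_one_minus[OF x] assms
    by (intro mult_mono prod_nonneg) (auto simp: field_simps)
  also have "\<dots> = (\<Prod>j=4..Suc M. 1 - \<beta> / real j)"
    using Suc.hyps by simp
  finally show ?case .
qed simp

lemma sum_inverse_le_ln:
  assumes "3 \<le> M"
  shows "(\<Sum>j=4..M. 1 / real j) \<le> ln (real M) - ln 3"
  using assms
proof (induction M rule: nat_induct_at_least)
  case (Suc M)
  have M: "0 < real M" using Suc.hyps by simp
  have "1 / real (Suc M) = (1 / real M) / (1 + 1 / real M)" using M by (simp add: field_simps)
  also have "\<dots> \<le> ln (1 + 1 / real M)" by (rule ln_one_plus_ge_divide) (use M in simp)
  also have "1 + 1 / real M = real (Suc M) / real M" using M by (simp add: field_simps)
  also have "ln \<dots> = ln (real (Suc M)) - ln (real M)" using M by (simp add: ln_div)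
  finally show ?case using Suc by simp
qed simp

lemma sum_inverse_square_le:
  assumes "3 \<le> M"
  shows "(\<Sum>j=4..M. 1 / (real j)\<^sup>2) \<le> 1 / 3 - 1 / real M"
  using assms
proof (induction M rule: nat_induct_at_least)
  case (Suc M)
  have M: "0 < real M" using Suc.hyps by simp
  have "1 / (real (Suc M))\<^sup>2 \<le> 1 / (real M * real (Suc M))"
    using M by (intro divide_left_mono) (auto simp: power2_eq_square)
  also have "\<dots> = 1 / real M - 1 / real (Suc M)" using M by (simp add: field_simps)
  finally show ?case using Suc by simp
qed simp

text \<open>The origin of the factor \<open>exp (- 9 / 4) * 4 powr \<beta>\<close> in \<open>cstar\<close>: the harmonic tail is at most
  \<open>ln (M / 3)\<close> and the tail of \<open>\<Sum> 1 / j\<^sup>2\<close> at most \<open>1 / 3\<close>.\<close>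

lemma prod_one_minus_ge_powr:
  fixes \<beta> :: real
  assumes "0 \<le> \<beta>" "\<beta> \<le> 2" "3 \<le> M"
  shows "exp (- 9 / 4) * 4 powr \<beta> * real M powr (- \<beta>) \<le> (\<Prod>j=4..M. 1 - \<beta> / real j)"
proof -
  have M: "0 < real M" "0 < 1 / real M" using assms by simp_all
  have "ln 4 - ln 3 \<le> (1 / 3 :: real)"
    using ln_add_one_self_le_self[of "1 / 3 :: real"] ln_div[of 4 3] by simp
  then have "\<beta> * (ln 4 - ln 3) \<le> 2 * (1 / 3)"
    using assms by (intro mult_mono) auto
  moreover have "\<beta> * (\<Sum>j=4..M. 1 / real j) \<le> \<beta> * (ln (real M) - ln 3)"
    using sum_inverse_le_ln[OF assms(3)] assms by (intro mult_left_mono) auto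
  moreover have "(\<Sum>j=4..M. 1 / (real j)\<^sup>2) \<le> 1 / 3"
    using sum_inverse_square_le[OF assms(3)] M by linarith
  then have "\<beta>\<^sup>2 * (\<Sum>j=4..M. 1 / (real j)\<^sup>2) \<le> 4 * (1 / 3)"
    using power_mono[of \<beta> 2 2] assms by (intro mult_mono) (auto intro: sum_nonneg)
  ultimately have "\<beta> * (\<Sum>j=4..M. 1 / real j) + \<beta>\<^sup>2 * (\<Sum>j=4..M. 1 / (real j)\<^sup>2)
      \<le> \<beta> * (ln (real M) - ln 4) + 9 / 4"
    by (simp add: algebra_simps)
  then have "exp (- (\<beta> * (ln (real M) - ln 4) + 9 / 4))
      \<le> exp (- (\<beta> * (\<Sum>j=4..M. 1 / real j) + \<beta>\<^sup>2 * (\<Sum>j=4..M. 1 / (real j)\<^sup>2)))"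
    by simp
  also have "\<dots> \<le> (\<Prod>j=4..M. 1 - \<beta> / real j)" by (rule prod_one_minus_ge_exp[OF assms])
  also have "exp (- (\<beta> * (ln (real M) - ln 4) + 9 / 4)) = exp (- 9 / 4) * 4 powr \<beta> * real M powr (- \<beta>)"
    using M by (simp add: powr_def exp_add[symmetric] exp_diff algebra_simps exp_minus field_simps)
  finally show ?thesis .
qed

lemma gR_sum_eq_prod_tail:
  assumes "3 \<le> M"
  shows "gR_sum \<beta> M = (1 - \<beta>) * ((2 - \<beta>) * (3 - \<beta>) / 6) * (\<Prod>j=4..M. 1 - \<beta> / real j)"
  using assms
proof (induction M rule: nat_induct_at_least)
  case base
  have "gR_sum \<beta> 3 = (1 - \<beta>) * (1 - \<beta> / 2) * (1 - \<beta> / 3)"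
    by (simp add: gR_sum_eq_prod numeral_3_eq_3 numeral_2_eq_2)
  then show ?case by (simp add: field_simps)
next
  case (Suc M)
  then show ?case by (simp add: gR_sum_Suc add.commute)
qed

lemma gR_sum_lower_bound:
  assumes "1 < \<beta>" "\<beta> < 2" "3 \<le> M"
  shows "cstar \<beta> / 2 * real M powr (- \<beta>) \<le> PsiR \<beta> * gR_sum \<beta> M"
proof -
  define c3 where "c3 = PsiR \<beta> * ((1 - \<beta>) * ((2 - \<beta>) * (3 - \<beta>) / 6))"
  have c3: "0 < c3"
    unfolding c3_def using PsiR_neg[OF assms(1,2)] assms by (intro mult_neg_neg) (auto intro!: mult_neg_pos)
  have "cstar \<beta> / 2 * real M powr (- \<beta>) = c3 * (exp (- 9 / 4) * 4 powr \<beta> * real M powr (- \<beta>))"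
    unfolding c3_def cstar_def by (simp add: field_simps)
  also have "\<dots> \<le> c3 * (\<Prod>j=4..M. 1 - \<beta> / real j)"
    using prod_one_minus_ge_powr[of \<beta> M] assms c3 by (intro mult_left_mono) auto
  also have "\<dots> = PsiR \<beta> * gR_sum \<beta> M"
    unfolding gR_sum_eq_prod_tail[OF assms(3)] c3_def by (simp only: mult.assoc)
  finally show ?thesis .
qed

lemma cstar_pos:
  assumes "1 < \<beta>" "\<beta> < 2"
  shows "0 < cstar \<beta>"
proof -
  have "0 < (1 - \<beta>) * PsiR \<beta>" using PsiR_neg[OF assms] assms by (simp add: mult_neg_neg)
  moreover have "0 < (2 - \<beta>) * (3 - \<beta>) * 4 powr \<beta> * exp (- 9 / 4) / 3" using assms by simp
  ultimately have "0 < ((1 - \<beta>) * PsiR \<beta>) * ((2 - \<beta>) * (3 - \<beta>) * 4 powr \<beta> * exp (- 9 / 4) / 3)"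
    by (rule mult_pos_pos)
  then show ?thesis unfolding cstar_def by (simp add: algebra_simps)
qed

lemma riesz_coercivity_const_le:
  assumes "1 < \<beta>" "\<beta> < 2" "a < b" "3 \<le> M"
  shows "cstar \<beta> / 2 * (b - a) powr (- \<beta>) \<le> ((b - a) / real M) powr (- \<beta>) * (PsiR \<beta> * gR_sum \<beta> M)"
proof -
  have "((b - a) / real M) powr (- \<beta>) * real M powr (- \<beta>) = (b - a) powr (- \<beta>)"
    using assms by (simp add: powr_mult[symmetric])
  then have "cstar \<beta> / 2 * (b - a) powr (- \<beta>) = ((b - a) / real M) powr (- \<beta>) * (cstar \<beta> / 2 * real M powr (- \<beta>))"
    by (simp add: algebra_simps)
  also have "\<dots> \<le> ((b - a) / real M) powr (- \<beta>) * (PsiR \<beta> * gR_sum \<beta> M)"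
    using gR_sum_lower_bound[OF assms(1,2,4)] by (intro mult_left_mono) auto
  finally show ?thesis .
qed

lemma rZ_quadratic_form_ge:
  fixes v :: "nat \<Rightarrow> real"
  assumes "1 < \<beta>" "\<beta> < 2" "3 \<le> M" "v 0 = 0" "v M = 0"
  shows "PsiR \<beta> * gR_sum \<beta> M * (\<Sum>j=1..M-1. (v j)\<^sup>2)
       \<le> (\<Sum>j=1..M-1. (\<Sum>k=0..M. rZ \<beta> (int j - int k) * v k) * v j)"
proof -
  let ?I = "{1..M-1}"
  have boundary: "(\<Sum>k=0..M. rZ \<beta> (int j - int k) * v k) = (\<Sum>k\<in>?I. rZ \<beta> (int j - int k) * v k)" for j
  proof -
    have "{0..M} = insert 0 (insert M ?I)" "0 \<notin> insert M ?I" "M \<notin> ?I" using assms by auto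
    then show ?thesis using assms by simp
  qed
  have "PsiR \<beta> * gR_sum \<beta> M * (\<Sum>j\<in>?I. (v j)\<^sup>2) \<le> (\<Sum>j\<in>?I. (\<Sum>k\<in>?I. rZ \<beta> (int j - int k)) * (v j)\<^sup>2)"
    unfolding sum_distrib_left using rZ_row_sum_ge[OF assms(1-3)]
    by (intro sum_mono mult_right_mono) auto
  also have "\<dots> \<le> (\<Sum>j\<in>?I. \<Sum>k\<in>?I. rZ \<beta> (int j - int k) * v k * v j)"
    using rR_nonpos[OF assms(1,2)]
    by (intro quadratic_form_ge_row_sums) (auto simp: rZ_def abs_minus_commute)
  also have "\<dots> = (\<Sum>j\<in>?I. (\<Sum>k=0..M. rZ \<beta> (int j - int k) * v k) * v j)"
    unfolding boundary by (simp add: sum_distrib_right)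
  finally show ?thesis .
qed

section \<open>Discrete energy estimates\<close>

lemma mono_weights_ge_first:
  fixes c :: "nat \<Rightarrow> real"
  assumes "\<And>i. 1 \<le> i \<Longrightarrow> i \<le> n \<Longrightarrow> c i \<le> c (Suc i)" "1 \<le> i" "i \<le> Suc n"
  shows "c 1 \<le> c i"
  using assms(2,3)
proof (induction i rule: dec_induct)
  case (step i)
  then show ?case using assms(1)[of i] by simp
qed simp

lemma weighted_telescope_ge:
  fixes c \<phi> :: "nat \<Rightarrow> real"
  assumes "\<And>i. 1 \<le> i \<Longrightarrow> i \<le> j \<Longrightarrow> - \<mu> \<le> \<phi> i"
    and "0 \<le> c 1" and "\<And>i. 1 \<le> i \<Longrightarrow> i < j \<Longrightarrow> c i \<le> c (Suc i)" and "1 \<le> j"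
  shows "- \<mu> * c j - c j * \<phi> (Suc j) \<le> (\<Sum>i=1..j. c i * (\<phi> i - \<phi> (Suc i)))"
  using assms(4,1,3)
proof (induction j rule: nat_induct_at_least)
  case base
  have "c 1 * (- \<mu>) \<le> c 1 * \<phi> 1" using base assms(2) by (intro mult_left_mono) auto
  then show ?case by (simp add: algebra_simps)
next
  case (Suc j)
  have "(c (Suc j) - c j) * (- \<mu>) \<le> (c (Suc j) - c j) * \<phi> (Suc j)"
    using Suc.prems Suc.hyps by (intro mult_left_mono) auto
  then have "- \<mu> * c (Suc j) - c (Suc j) * \<phi> (Suc (Suc j))
      \<le> - \<mu> * c j - c j * \<phi> (Suc j) + c (Suc j) * (\<phi> (Suc j) - \<phi> (Suc (Suc j)))"
    by (simp add: algebra_simps)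
  also have "\<dots> \<le> (\<Sum>i=1..Suc j. c i * (\<phi> i - \<phi> (Suc i)))"
    using Suc by simp
  finally show ?case .
qed

text \<open>Each summand of the difference of the two sides telescopes as \<open>c i * (\<phi> i - \<phi> (i + 1))\<close> with
  \<open>\<phi>\<close> bounded below; summation by parts then leaves only the last two weights, which is where the
  condition on \<open>\<sigma>\<^sup>2 * c (m - 1)\<close> enters.\<close>

lemma alikhanov_energy_ineq:
  fixes c v :: "nat \<Rightarrow> real" and \<sigma> :: real
  assumes m: "1 \<le> m" and c1: "0 \<le> c 1" and cm: "0 \<le> c m"
    and mono: "\<And>i. 1 \<le> i \<Longrightarrow> Suc i < m \<Longrightarrow> c i \<le> c (Suc i)"
    and last: "2 \<le> m \<Longrightarrow> \<sigma>\<^sup>2 * c (m - 1) \<le> (2 * \<sigma> - 1) * c m"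
    and \<sigma>: "1 / 2 \<le> \<sigma>" "\<sigma> \<le> 1"
  shows "(\<Sum>i=1..m. c i * ((v i)\<^sup>2 - (v (i - 1))\<^sup>2)) / 2
       \<le> (\<Sum>i=1..m. c i * (v i - v (i - 1))) * (\<sigma> * v m + (1 - \<sigma>) * v (m - 1))"
proof -
  define \<delta> where "\<delta> = v m - v (m - 1)"
  define \<phi> where "\<phi> = (\<lambda>i. (v m - v (i - 1))\<^sup>2 / 2 - (1 - \<sigma>) * \<delta> * (v m - v (i - 1)))"
  define \<mu> where "\<mu> = (1 - \<sigma>)\<^sup>2 * \<delta>\<^sup>2 / 2"
  have summand: "c i * (v i - v (i - 1)) * (\<sigma> * v m + (1 - \<sigma>) * v (m - 1)) - c i * ((v i)\<^sup>2 - (v (i - 1))\<^sup>2) / 2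
      = c i * (\<phi> i - \<phi> (Suc i))" for i
    unfolding \<phi>_def \<delta>_def by (simp add: power2_eq_square field_simps)
  have \<phi>_ge: "- \<mu> \<le> \<phi> i" for i
  proof -
    have "0 \<le> (v m - v (i - 1) - (1 - \<sigma>) * \<delta>)\<^sup>2 / 2" by simp
    then show ?thesis unfolding \<phi>_def \<mu>_def by (simp add: power2_eq_square field_simps)
  qed
  have \<phi>_m: "\<phi> m = (\<sigma> - 1 / 2) * \<delta>\<^sup>2" and \<phi>_Suc_m: "\<phi> (Suc m) = 0"
    unfolding \<phi>_def \<delta>_def by (simp_all add: power2_eq_square field_simps)
  have "0 \<le> (\<Sum>i=1..m. c i * (\<phi> i - \<phi> (Suc i)))"
  proof (cases "m = 1")
    case True
    then show ?thesis using c1 \<sigma> \<phi>_m \<phi>_Suc_m by simp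
  next
    case False
    then have m2: "2 \<le> m" using m by simp
    have "- \<mu> * c (m - 1) - c (m - 1) * \<phi> m \<le> (\<Sum>i=1..m-1. c i * (\<phi> i - \<phi> (Suc i)))"
      using weighted_telescope_ge[of "m - 1" \<mu> \<phi> c] \<phi>_ge c1 mono m2 by simp
    moreover have "- \<mu> * c (m - 1) - c (m - 1) * \<phi> m + c m * \<phi> m
        = \<delta>\<^sup>2 / 2 * ((2 * \<sigma> - 1) * c m - \<sigma>\<^sup>2 * c (m - 1))"
      unfolding \<mu>_def \<phi>_m by (simp add: power2_eq_square field_simps)
    moreover have "0 \<le> \<delta>\<^sup>2 / 2 * ((2 * \<sigma> - 1) * c m - \<sigma>\<^sup>2 * c (m - 1))"
      using last[OF m2] by simp
    moreover have "{1..m} = insert m {1..m-1}" "m \<notin> {1..m-1}" using m2 by auto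
    then have "(\<Sum>i=1..m. c i * (\<phi> i - \<phi> (Suc i))) = (\<Sum>i=1..m-1. c i * (\<phi> i - \<phi> (Suc i))) + c m * \<phi> m"
      using \<phi>_Suc_m by simp
    ultimately show ?thesis by linarith
  qed
  also have "(\<Sum>i=1..m. c i * (\<phi> i - \<phi> (Suc i)))
      = (\<Sum>i=1..m. c i * (v i - v (i - 1)) * (\<sigma> * v m + (1 - \<sigma>) * v (m - 1))
          - c i * ((v i)\<^sup>2 - (v (i - 1))\<^sup>2) / 2)"
    by (simp only: summand)
  also have "\<dots> = (\<Sum>i=1..m. c i * (v i - v (i - 1))) * (\<sigma> * v m + (1 - \<sigma>) * v (m - 1))
      - (\<Sum>i=1..m. c i * ((v i)\<^sup>2 - (v (i - 1))\<^sup>2)) / 2"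
    by (simp add: sum_distrib_right sum_subtractf sum_divide_distrib)
  finally show ?thesis by simp
qed

lemma sum_weighted_increments_eq:
  fixes c y :: "nat \<Rightarrow> real"
  shows "(\<Sum>i=1..Suc n. c i * (y i - y (i - 1)))
       = c (Suc n) * y (Suc n) - c 1 * y 0 - (\<Sum>i=1..n. (c (Suc i) - c i) * y i)"
  by (induction n) (simp_all add: algebra_simps)

text \<open>A discrete maximum principle: the weights of the n-th step may change with n, which is why
  the bound is proved by strong induction rather than by telescoping.\<close>

lemma weighted_increments_bound:
  fixes y :: "nat \<Rightarrow> real" and c :: "nat \<Rightarrow> nat \<Rightarrow> real"
  assumes step: "\<And>n. n < K \<Longrightarrow> (\<Sum>i=1..Suc n. c i n * (y i - y (i - 1))) \<le> c 1 n * Q"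
    and pos: "\<And>n. n < K \<Longrightarrow> 0 < c 1 n"
    and mono: "\<And>n i. n < K \<Longrightarrow> 1 \<le> i \<Longrightarrow> i \<le> n \<Longrightarrow> c i n \<le> c (Suc i) n"
    and Q: "0 \<le> Q" and j: "j \<le> K"
  shows "y j \<le> y 0 + Q"
  using j
proof (induction j rule: less_induct)
  case (less j)
  show ?case
  proof (cases j)
    case 0
    then show ?thesis using Q by simp
  next
    case (Suc n)
    then have n: "n < K" using less.prems by simp
    have IH: "y i \<le> y 0 + Q" if "i \<le> n" for i
      using less.IH[of i] less.prems Suc that by simp
    have c1: "c 1 n \<le> c (Suc n) n"
      using mono_weights_ge_first[of n "\<lambda>i. c i n"] mono[OF n] by simp
    have "(\<Sum>i=1..n. (c (Suc i) n - c i n) * y i) \<le> (\<Sum>i=1..n. (c (Suc i) n - c i n) * (y 0 + Q))"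
      using mono[OF n] IH by (intro sum_mono mult_left_mono) auto
    also have "\<dots> = (c (Suc n) n - c 1 n) * (y 0 + Q)"
      using sum_Suc_diff[of 1 n "\<lambda>i. c i n"] by (cases n) (auto simp: sum_distrib_right[symmetric])
    finally have "c (Suc n) n * y (Suc n) \<le> c 1 n * Q + c 1 n * y 0 + (c (Suc n) n - c 1 n) * (y 0 + Q)"
      using step[OF n] sum_weighted_increments_eq[of "\<lambda>i. c i n" y n] by simp
    also have "\<dots> = c (Suc n) n * (y 0 + Q)" by (simp add: algebra_simps)
    finally show ?thesis
      using Suc pos[OF n] c1 by simp
  qed
qed

lemma mult_le_square_plus:
  fixes F v L :: real
  assumes "0 < L"
  shows "F * v \<le> L * v\<^sup>2 + F\<^sup>2 / (4 * L)"
proof -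
  have "0 \<le> (2 * L * v - F)\<^sup>2 / (4 * L)" using assms by simp
  also have "\<dots> = L * v\<^sup>2 - F * v + F\<^sup>2 / (4 * L)"
    using assms by (simp add: power2_eq_square field_simps)
  finally show ?thesis by simp
qed

lemma discrete_energy_step:
  fixes c :: "nat \<Rightarrow> real" and U :: "nat \<Rightarrow> nat \<Rightarrow> real" and F :: "nat \<Rightarrow> real"
  assumes c1: "0 \<le> c 1" and cn: "0 \<le> c (Suc n)"
    and mono: "\<And>i. 1 \<le> i \<Longrightarrow> i < n \<Longrightarrow> c i \<le> c (Suc i)"
    and last: "1 \<le> n \<Longrightarrow> \<sigma>\<^sup>2 * c n \<le> (2 * \<sigma> - 1) * c (Suc n)"
    and \<sigma>: "1 / 2 \<le> \<sigma>" "\<sigma> \<le> 1"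
    and \<beta>: "1 < \<beta>" "\<beta> < 2" and M: "3 \<le> M" and h: "0 < h"
    and boundary: "U (Suc n) 0 = 0" "U (Suc n) M = 0" "U n 0 = 0" "U n M = 0"
    and eq: "\<And>j. j \<in> {1..M-1} \<Longrightarrow> (\<Sum>i=1..Suc n. c i * (U i j - U (i - 1) j))
         + h powr (- \<beta>) * (\<Sum>k=0..M. rZ \<beta> (int j - int k) * (\<sigma> * U (Suc n) k + (1 - \<sigma>) * U n k)) = F j"
    and L: "0 < L" "L \<le> h powr (- \<beta>) * (PsiR \<beta> * gR_sum \<beta> M)"
  shows "(\<Sum>i=1..Suc n. c i * ((\<Sum>j=1..M-1. (U i j)\<^sup>2) - (\<Sum>j=1..M-1. (U (i - 1) j)\<^sup>2)))
       \<le> (\<Sum>j=1..M-1. (F j)\<^sup>2) / (2 * L)"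
proof -
  let ?I = "{1..M-1}"
  define v where "v = (\<lambda>k. \<sigma> * U (Suc n) k + (1 - \<sigma>) * U n k)"
  define D where "D = (\<lambda>j. \<Sum>i=1..Suc n. c i * (U i j - U (i - 1) j))"
  define A where "A = (\<lambda>j. \<Sum>k=0..M. rZ \<beta> (int j - int k) * v k)"
  have "(\<Sum>i=1..Suc n. c i * ((\<Sum>j\<in>?I. (U i j)\<^sup>2) - (\<Sum>j\<in>?I. (U (i - 1) j)\<^sup>2)))
      = (\<Sum>j\<in>?I. \<Sum>i=1..Suc n. c i * ((U i j)\<^sup>2 - (U (i - 1) j)\<^sup>2))"
    by (subst sum.swap) (simp add: sum_subtractf[symmetric] sum_distrib_left)
  then have "(\<Sum>i=1..Suc n. c i * ((\<Sum>j\<in>?I. (U i j)\<^sup>2) - (\<Sum>j\<in>?I. (U (i - 1) j)\<^sup>2))) / 2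
      = (\<Sum>j\<in>?I. (\<Sum>i=1..Suc n. c i * ((U i j)\<^sup>2 - (U (i - 1) j)\<^sup>2)) / 2)"
    by (simp add: sum_divide_distrib)
  also have "\<dots> \<le> (\<Sum>j\<in>?I. D j * v j)"
  proof (rule sum_mono)
    fix j
    show "(\<Sum>i=1..Suc n. c i * ((U i j)\<^sup>2 - (U (i - 1) j)\<^sup>2)) / 2 \<le> D j * v j"
      using alikhanov_energy_ineq[of "Suc n" c \<sigma> "\<lambda>i. U i j"] c1 cn mono last \<sigma>
      unfolding D_def v_def by simp
  qed
  also have "\<dots> = (\<Sum>j\<in>?I. (F j - h powr (- \<beta>) * A j) * v j)"
  proof (rule sum.cong[OF refl])
    fix j assume "j \<in> ?I"
    then have "D j = F j - h powr (- \<beta>) * A j"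
      using eq unfolding D_def A_def v_def by (simp only: eq_diff_eq)
    then show "D j * v j = (F j - h powr (- \<beta>) * A j) * v j" by simp
  qed
  also have "\<dots> = (\<Sum>j\<in>?I. F j * v j) - h powr (- \<beta>) * (\<Sum>j\<in>?I. A j * v j)"
    by (simp add: left_diff_distrib sum_subtractf sum_distrib_left mult.assoc)
  also have "\<dots> \<le> (\<Sum>j\<in>?I. F j * v j) - L * (\<Sum>j\<in>?I. (v j)\<^sup>2)"
  proof -
    have "L * (\<Sum>j\<in>?I. (v j)\<^sup>2) \<le> h powr (- \<beta>) * (PsiR \<beta> * gR_sum \<beta> M * (\<Sum>j\<in>?I. (v j)\<^sup>2))"
      using L by (simp add: mult_right_mono sum_nonneg mult.assoc[symmetric])
    also have "\<dots> \<le> h powr (- \<beta>) * (\<Sum>j\<in>?I. A j * v j)"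
      unfolding A_def using h rZ_quadratic_form_ge[OF \<beta> M, of v] boundary
      by (intro mult_left_mono) (auto simp: v_def)
    finally show ?thesis by simp
  qed
  also have "\<dots> \<le> (\<Sum>j\<in>?I. (F j)\<^sup>2) / (4 * L)"
    using sum_mono[of ?I "\<lambda>j. F j * v j" "\<lambda>j. L * (v j)\<^sup>2 + (F j)\<^sup>2 / (4 * L)"] mult_le_square_plus[OF L(1)]
    by (simp add: sum.distrib sum_distrib_left sum_divide_distrib)
  finally show ?thesis using L by (simp add: field_simps)
qed

section \<open>L2-1\<open>\<sigma>\<close> coefficients on a logarithmic grid\<close>

locale log_grid =
  fixes ta T :: real and N :: nat
  assumes ta_pos: "0 < ta" and step_pos: "0 < (T - ta) / real N"
begin

definition tau :: real where
  "tau = (T - ta) / real N"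

definition logt :: "real \<Rightarrow> real" where
  "logt x = ln (tg ta T N x)"

abbreviation lnode :: "nat \<Rightarrow> real" where
  "lnode j \<equiv> logt (real j)"

lemma tau_pos: "0 < tau"
  using step_pos by (simp add: tau_def)

lemma tg_eq: "tg ta T N x = ta + x * tau"
  by (simp add: tg_def tau_def)

lemma tg_ge: "0 \<le> x \<Longrightarrow> ta \<le> tg ta T N x"
  using tau_pos unfolding tg_eq by simp

lemma tg_pos: "0 \<le> x \<Longrightarrow> 0 < tg ta T N x"
  using tg_ge ta_pos by (meson order.strict_trans2)

lemma ln_tg_divide: "0 \<le> x \<Longrightarrow> 0 \<le> y \<Longrightarrow> ln (tg ta T N x / tg ta T N y) = logt x - logt y"
  unfolding logt_def using tg_pos[of x] tg_pos[of y] by (simp add: ln_div)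

lemma logt_less:
  assumes "0 \<le> x" "x < y"
  shows "logt x < logt y"
proof -
  have "tg ta T N x < tg ta T N y"
    using mult_strict_right_mono[OF assms(2) tau_pos] by (simp add: tg_eq)
  then show ?thesis unfolding logt_def using tg_pos[OF assms(1)] by simp
qed

lemma lnode_less: "i < j \<Longrightarrow> lnode i < lnode j"
  by (rule logt_less) auto

lemma lnode_less_logt: "0 < \<sigma> \<Longrightarrow> i \<le> k \<Longrightarrow> lnode i < logt (real k + \<sigma>)"
  by (rule logt_less) auto

lemma lnode_step_eq: "lnode (Suc i) - lnode i = ln (1 + tau / tg ta T N (real i))"
proof -
  have "tg ta T N (real (Suc i)) / tg ta T N (real i) = 1 + tau / tg ta T N (real i)"
    using tg_pos[of "real i"] by (simp add: tg_eq field_simps)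
  then show ?thesis using ln_tg_divide[of "real (Suc i)" "real i"] by simp
qed

lemma logt_partial_step_ge:
  assumes "0 \<le> \<sigma>" "\<sigma> \<le> 1"
  shows "\<sigma> * (lnode (Suc k) - lnode k) \<le> logt (real k + \<sigma>) - lnode k"
proof -
  have "\<sigma> * ln (1 + tau / tg ta T N (real k)) \<le> ln (1 + \<sigma> * (tau / tg ta T N (real k)))"
    using assms tg_pos[of "real k"] tau_pos by (intro mult_ln_one_plus_le) auto
  also have "1 + \<sigma> * (tau / tg ta T N (real k)) = tg ta T N (real k + \<sigma>) / tg ta T N (real k)"
    using tg_pos[of "real k"] by (simp add: tg_eq field_simps)
  also have "ln \<dots> = logt (real k + \<sigma>) - lnode k"
    using assms by (intro ln_tg_divide) auto
  finally show ?thesis unfolding lnode_step_eq .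
qed

lemma logt_sub_logt_zero_le:
  assumes "0 \<le> x"
  shows "logt x - logt 0 \<le> x * tau / ta"
proof -
  have "logt x - logt 0 = ln (1 + x * tau / ta)"
    using ln_tg_divide[of x 0] assms ta_pos by (simp add: tg_eq field_simps)
  also have "\<dots> \<le> x * tau / ta"
    using assms ta_pos tau_pos by (intro ln_add_one_self_le_self) auto
  finally show ?thesis .
qed

lemma a_coef_eq:
  assumes "0 < \<sigma>" "\<alpha> < 1" "1 \<le> i" "i \<le> k"
  shows "a_coef \<alpha> \<sigma> ta T N i k = (1 - \<alpha>) * frac_kernel_mass \<alpha> (logt (real k + \<sigma>)) (lnode (i - 1)) (lnode i)"
proof -
  have i: "real i - 1 = real (i - 1)" using assms by (simp add: of_nat_diff)
  have "lnode (i - 1) \<le> lnode i" "lnode i < logt (real k + \<sigma>)"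
    using assms lnode_less[of "i - 1" i] lnode_less_logt by auto
  then show ?thesis
    using assms unfolding a_coef_def i by (simp add: ln_tg_divide frac_kernel_mass_eq)
qed

lemma b_coef_eq:
  assumes "0 < \<sigma>" "\<alpha> < 1" "1 \<le> i" "i \<le> k"
  shows "b_coef \<alpha> \<sigma> ta T N i k = (1 - \<alpha>) * (2 / (lnode (i + 1) - lnode (i - 1)))
           * frac_kernel_moment \<alpha> (logt (real k + \<sigma>)) (lnode (i - 1)) (lnode i)"
proof -
  define S where "S = logt (real k + \<sigma>)"
  define A where "A = S - lnode (i - 1)"
  define B where "B = S - lnode i"
  define D where "D = lnode (i + 1) - lnode (i - 1)"
  have i: "real i - 1 = real (i - 1)" "real i + 1 = real (i + 1)" using assms by (simp_all add: of_nat_diff)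
  have xy: "lnode (i - 1) < lnode i" "lnode i < S"
    using assms lnode_less[of "i - 1" i] lnode_less_logt unfolding S_def by auto
  then have AB: "0 < A" "0 < B" unfolding A_def B_def by auto
  have A2: "A powr (2 - \<alpha>) = A * A powr (1 - \<alpha>)" and B2: "B powr (2 - \<alpha>) = B * B powr (1 - \<alpha>)"
    using powr_mult_base[of A "1 - \<alpha>"] powr_mult_base[of B "1 - \<alpha>"] AB by simp_all
  have identity: "2 / w * (A * P - B * Q) - (A - B) * (Q + P) = u * 2 * ((A + B) / 2 * (P - Q) / u - (A * P - B * Q) / w)"
    if "u \<noteq> 0" "w \<noteq> 0" "w = 1 + u" for u w P Q
    using that(1,2) by (simp add: field_simps) (simp add: that(3) algebra_simps)
  have "b_coef \<alpha> \<sigma> ta T N i k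
      = 1 / D * (2 / (2 - \<alpha>) * (A powr (2 - \<alpha>) - B powr (2 - \<alpha>)) - (A - B) * (B powr (1 - \<alpha>) + A powr (1 - \<alpha>)))"
    using assms unfolding b_coef_def i A_def B_def D_def S_def by (simp add: ln_tg_divide)
  also have "\<dots> = 1 / D * ((1 - \<alpha>) * 2 * ((A + B) / 2 * (A powr (1 - \<alpha>) - B powr (1 - \<alpha>)) / (1 - \<alpha>)
      - (A powr (2 - \<alpha>) - B powr (2 - \<alpha>)) / (2 - \<alpha>)))"
    unfolding A2 B2 using assms by (subst identity) auto
  also have "\<dots> = (1 - \<alpha>) * (2 / D) * frac_kernel_moment \<alpha> S (lnode (i - 1)) (lnode i)"
    using xy assms unfolding A_def B_def by (simp add: frac_kernel_moment_eq)
  finally show ?thesis unfolding D_def S_def .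
qed

lemma c_coef_eq:
  assumes "0 < \<sigma>" "\<alpha> < 1" "1 \<le> i" "i \<le> k"
  defines "S \<equiv> logt (real k + \<sigma>)"
  shows "c_coef \<alpha> \<sigma> ta T N i k =
    (1 - \<alpha>) * (frac_kernel_mass \<alpha> S (lnode (i - 1)) (lnode i)
        - 2 / (lnode (i + 1) - lnode (i - 1)) * frac_kernel_moment \<alpha> S (lnode (i - 1)) (lnode i)
        + (if i = 1 then 0
           else 2 / (lnode i - lnode (i - 2)) * frac_kernel_moment \<alpha> S (lnode (i - 2)) (lnode (i - 1))))
    / (Gamma (2 - \<alpha>) * (lnode i - lnode (i - 1)))"
proof -
  have k: "k \<noteq> 0" "i \<noteq> k + 1" using assms by auto
  have den: "ln (tg ta T N (real i) / tg ta T N (real i - 1)) = lnode i - lnode (i - 1)"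
    using assms by (simp add: of_nat_diff ln_tg_divide)
  show ?thesis
  proof (cases "i = 1")
    case True
    then have "c_coef \<alpha> \<sigma> ta T N i k
        = (a_coef \<alpha> \<sigma> ta T N i k - b_coef \<alpha> \<sigma> ta T N i k) / (Gamma (2 - \<alpha>) * (lnode i - lnode (i - 1)))"
      using k den unfolding c_coef_def by simp
    then show ?thesis
      unfolding a_coef_eq[OF assms(1-4)] b_coef_eq[OF assms(1-4)] S_def using True
      by (simp add: right_diff_distrib mult.assoc)
  next
    case False
    then have "c_coef \<alpha> \<sigma> ta T N i k
        = (a_coef \<alpha> \<sigma> ta T N i k + b_coef \<alpha> \<sigma> ta T N (i - 1) k - b_coef \<alpha> \<sigma> ta T N i k)
          / (Gamma (2 - \<alpha>) * (lnode i - lnode (i - 1)))"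
      using k den unfolding c_coef_def by simp
    moreover have "b_coef \<alpha> \<sigma> ta T N (i - 1) k = (1 - \<alpha>) * (2 / (lnode i - lnode (i - 2)))
        * frac_kernel_moment \<alpha> S (lnode (i - 2)) (lnode (i - 1))"
      using False b_coef_eq[of \<sigma> \<alpha> "i - 1" k] assms by (simp add: numeral_2_eq_2)
    ultimately show ?thesis
      unfolding a_coef_eq[OF assms(1-4)] b_coef_eq[OF assms(1-4)] S_def[symmetric] using False
      by (simp add: algebra_simps)
  qed
qed

lemma c_coef_ge_frac_kernel:
  assumes "0 < \<sigma>" "0 \<le> \<alpha>" "\<alpha> < 1" "1 \<le> i" "i \<le> k"
  shows "(1 - \<alpha>) * frac_kernel \<alpha> (logt (real k + \<sigma>)) (lnode (i - 1)) / Gamma (2 - \<alpha>)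
      \<le> c_coef \<alpha> \<sigma> ta T N i k"
proof -
  define S where "S = logt (real k + \<sigma>)"
  let ?x = "lnode (i - 1)" and ?y = "lnode i" and ?K = "frac_kernel \<alpha> S"
  have xy: "?x < ?y" "?y < S" "?y - ?x \<le> lnode (i + 1) - lnode (i - 1)"
    using assms lnode_less[of "i - 1" i] lnode_less[of i "i + 1"] lnode_less_logt unfolding S_def by auto
  have g: "0 < Gamma (2 - \<alpha>)" using assms by (intro Gamma_real_pos) simp
  have prev: "0 \<le> (if i = 1 then 0
      else 2 / (lnode i - lnode (i - 2)) * frac_kernel_moment \<alpha> S (lnode (i - 2)) (lnode (i - 1)))"
  proof (cases "i = 1")
    case False
    have "lnode (i - 2) < lnode (i - 1)" "lnode (i - 2) < lnode i"
      by (rule lnode_less, use False assms in simp)+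
    moreover have "0 \<le> frac_kernel_moment \<alpha> S (lnode (i - 2)) (lnode (i - 1))"
      using calculation(1) xy(2) lnode_less[of "i - 1" i] assms
      by (intro frac_kernel_moment_nonneg) auto
    ultimately have "0 \<le> 2 / (lnode i - lnode (i - 2)) * frac_kernel_moment \<alpha> S (lnode (i - 2)) (lnode (i - 1))"
      by (intro mult_nonneg_nonneg divide_nonneg_pos) auto
    then show ?thesis unfolding if_not_P[OF False] .
  qed simp
  have "(1 - \<alpha>) * ?K ?x / Gamma (2 - \<alpha>) = (1 - \<alpha>) * (?K ?x * (?y - ?x)) / (Gamma (2 - \<alpha>) * (?y - ?x))"
    using xy g by simp
  also have "\<dots> \<le> c_coef \<alpha> \<sigma> ta T N i k"
    unfolding c_coef_eq[OF assms(1,3-5)] S_def[symmetric]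
    using frac_kernel_tent_lower[OF less_imp_le[OF xy(1)] xy(2) assms(2,3) xy(3)] prev g xy assms
    by (intro divide_right_mono mult_left_mono) auto
  finally show ?thesis unfolding S_def .
qed

lemma c_coef_pos:
  assumes "0 < \<sigma>" "0 \<le> \<alpha>" "\<alpha> < 1" "1 \<le> i" "i \<le> k"
  shows "0 < c_coef \<alpha> \<sigma> ta T N i k"
proof -
  have "lnode (i - 1) < logt (real k + \<sigma>)"
    using assms by (intro lnode_less_logt) auto
  then have "0 < (1 - \<alpha>) * frac_kernel \<alpha> (logt (real k + \<sigma>)) (lnode (i - 1)) / Gamma (2 - \<alpha>)"
    using assms by (intro divide_pos_pos mult_pos_pos frac_kernel_pos Gamma_real_pos) auto
  also have "\<dots> \<le> c_coef \<alpha> \<sigma> ta T N i k" by (rule c_coef_ge_frac_kernel[OF assms])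
  finally show ?thesis .
qed

lemma c_coef_next_ge:
  fixes k :: nat
  assumes "0 < \<sigma>" "0 \<le> \<alpha>" "\<alpha> < 1"
  defines "X \<equiv> logt (real k + \<sigma>) - lnode k" and "h \<equiv> lnode (Suc k) - lnode k"
  shows "X powr (1 - \<alpha>) / (Gamma (2 - \<alpha>) * h) \<le> c_coef \<alpha> \<sigma> ta T N (Suc k) k"
proof -
  have lnX: "ln (tg ta T N (real k + \<sigma>) / tg ta T N (real k)) = X"
    unfolding X_def using assms by (intro ln_tg_divide) auto
  have lnh: "ln (tg ta T N (real k + 1) / tg ta T N (real k)) = h"
    unfolding h_def using ln_tg_divide[of "real k + 1" "real k"] by (simp add: add.commute)
  have h: "0 < h" unfolding h_def using lnode_less[of k "Suc k"] by simp
  have g: "0 < Gamma (2 - \<alpha>)" using assms by (intro Gamma_real_pos) simp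
  show ?thesis
  proof (cases "k = 0")
    case True
    then show ?thesis using lnX lnh unfolding c_coef_def by simp
  next
    case False
    have "b_coef \<alpha> \<sigma> ta T N k k = (1 - \<alpha>) * (2 / (lnode (k + 1) - lnode (k - 1)))
        * frac_kernel_moment \<alpha> (logt (real k + \<sigma>)) (lnode (k - 1)) (lnode k)"
      using False assms by (intro b_coef_eq) auto
    moreover have "lnode (k - 1) < lnode k" "lnode (k - 1) < lnode (k + 1)"
      by (rule lnode_less, use False in simp)+
    moreover have "0 \<le> frac_kernel_moment \<alpha> (logt (real k + \<sigma>)) (lnode (k - 1)) (lnode k)"
      using calculation(2) lnode_less_logt[OF assms(1) order_refl] assms
      by (intro frac_kernel_moment_nonneg) auto
    ultimately have "0 \<le> b_coef \<alpha> \<sigma> ta T N k k"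
      using assms by simp
    then show ?thesis
      using False lnX lnh g h unfolding c_coef_def by (simp add: divide_right_mono)
  qed
qed

lemma c_coef_first_ge:
  assumes "0 \<le> \<alpha>" "\<alpha> < 1" "1 - \<alpha> \<le> \<sigma>" "\<sigma> \<le> 1"
  shows "((real k + \<sigma>) * tau / ta) powr (- \<alpha>) / Gamma (1 - \<alpha>) \<le> c_coef \<alpha> \<sigma> ta T N 1 k"
proof -
  define X where "X = logt (real k + \<sigma>) - logt 0"
  have \<sigma>: "0 < \<sigma>" using assms by simp
  have X: "0 < X" unfolding X_def using logt_less[of 0 "real k + \<sigma>"] \<sigma> by simp
  have g: "Gamma (2 - \<alpha>) = (1 - \<alpha>) * Gamma (1 - \<alpha>)" "0 < Gamma (1 - \<alpha>)"
    using assms by (simp_all add: Gamma_two_minus Gamma_real_pos)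
  have "((real k + \<sigma>) * tau / ta) powr (- \<alpha>) \<le> X powr (- \<alpha>)"
    unfolding X_def using logt_sub_logt_zero_le[of "real k + \<sigma>"] X \<sigma> assms
    by (intro powr_mono2') (auto simp: X_def)
  also have "X powr (- \<alpha>) / Gamma (1 - \<alpha>) \<le> c_coef \<alpha> \<sigma> ta T N 1 k"
  proof (cases "k = 0")
    case True
    define h where "h = lnode 1 - lnode 0"
    have h: "0 < h" "\<sigma> * h \<le> X"
      using lnode_less[of 0 1] logt_partial_step_ge[of \<sigma> 0] assms True unfolding h_def X_def by auto
    have "X powr (- \<alpha>) / Gamma (1 - \<alpha>) = (1 - \<alpha>) * h * X powr (- \<alpha>) / (Gamma (2 - \<alpha>) * h)"
      using g h assms by simp
    also have "\<dots> \<le> X * X powr (- \<alpha>) / (Gamma (2 - \<alpha>) * h)"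
    proof -
      have "(1 - \<alpha>) * h \<le> X"
        using mult_right_mono[OF assms(3) less_imp_le[OF h(1)]] h(2) by linarith
      then show ?thesis using g h assms by (intro divide_right_mono mult_right_mono) auto
    qed
    also have "X * X powr (- \<alpha>) = X powr (1 - \<alpha>)"
      using powr_mult_base[of X "- \<alpha>"] X by simp
    also have "X powr (1 - \<alpha>) / (Gamma (2 - \<alpha>) * h) \<le> c_coef \<alpha> \<sigma> ta T N 1 k"
      using c_coef_next_ge[OF \<sigma> assms(1,2), of 0] True unfolding h_def X_def by simp
    finally show ?thesis .
  next
    case False
    then show ?thesis
      using c_coef_ge_frac_kernel[OF \<sigma> assms(1,2), of 1 k] g assms(2)
      by (simp add: frac_kernel_def X_def)
  qed
  finally show ?thesis using g by (simp add: divide_right_mono)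
qed

end

lemma alikhanov_sigma_bound:
  fixes \<alpha> \<sigma> h X :: real
  assumes "\<sigma> = 1 - \<alpha> / 2" "0 \<le> \<alpha>" "\<alpha> \<le> 1" "0 < h" "\<sigma> * h \<le> X"
  shows "\<sigma>\<^sup>2 * (1 + \<alpha> * h / (2 * X)) \<le> X / h"
proof -
  have "0 < \<sigma> * h" using assms by simp
  then have X: "0 < X" using assms(5) by linarith
  have "0 \<le> (X - \<sigma> * h) * (X + (\<sigma> - \<sigma>\<^sup>2) * h)"
    using assms X by (intro mult_nonneg_nonneg) (auto simp: power2_eq_square intro!: add_nonneg_nonneg mult_nonneg_nonneg)
  also have "\<dots> = X\<^sup>2 - \<sigma>\<^sup>2 * h * (X + \<alpha> * h / 2)"
  proof -
    have \<alpha>: "\<alpha> = 2 - 2 * \<sigma>" using assms(1) by simp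
    show ?thesis unfolding \<alpha> by (simp add: power2_eq_square field_simps)
  qed
  finally have "\<sigma>\<^sup>2 * h * (X + \<alpha> * h / 2) \<le> X\<^sup>2" by simp
  then show ?thesis using X assms(4) by (simp add: field_simps power2_eq_square)
qed

locale fine_log_grid = log_grid +
  assumes step_small: "(T - ta) / real N \<le> ta / 8"
begin

lemma lnode_step_le_ratio: "lnode (Suc i) - lnode i \<le> 5 / 4 * (lnode (Suc (Suc i)) - lnode (Suc i))"
proof -
  let ?a = "tg ta T N (real i)"
  have \<tau>: "0 < tau" "8 * tau \<le> ta" using tau_pos step_small unfolding tau_def by linarith+
  have a: "ta \<le> ?a" by (rule tg_ge) simp
  have "ln (1 + tau / ?a) \<le> tau / ?a"
    using a \<tau> ta_pos by (intro ln_add_one_self_le_self) auto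
  also have "\<dots> \<le> 5 / 4 * (tau / (?a + 2 * tau))"
  proof -
    have "4 * (?a + 2 * tau) \<le> 5 * ?a" using a \<tau> by simp
    then show ?thesis using a \<tau> ta_pos by (simp add: field_simps)
  qed
  also have "\<dots> = 5 / 4 * ((tau / (?a + tau)) / (1 + tau / (?a + tau)))"
  proof -
    have "?a + tau \<noteq> 0" "?a + 2 * tau \<noteq> 0" using a \<tau> ta_pos by auto
    moreover from this have "1 + tau / (?a + tau) = (?a + 2 * tau) / (?a + tau)"
      by (simp add: field_simps)
    ultimately show ?thesis by simp
  qed
  also have "\<dots> \<le> 5 / 4 * ln (1 + tau / (?a + tau))"
    using a \<tau> ta_pos by (intro mult_left_mono ln_one_plus_ge_divide) auto
  also have "?a + tau = tg ta T N (real (Suc i))" by (simp add: tg_eq algebra_simps)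
  finally show ?thesis unfolding lnode_step_eq .
qed

text \<open>The term \<open>b_coef \<alpha> \<sigma> ta T N (j + 1) k\<close> of \<open>c_coef \<alpha> \<sigma> ta T N (j + 2) k\<close>, bounded through the
  slope of the kernel on the following cell.\<close>

lemma prev_cell_moment_le:
  assumes "0 < \<sigma>" "0 \<le> \<alpha>" "\<alpha> < 1" "Suc (Suc j) \<le> k"
  defines "K \<equiv> frac_kernel \<alpha> (logt (real k + \<sigma>))"
  shows "2 / (lnode (Suc (Suc j)) - lnode j) * frac_kernel_moment \<alpha> (logt (real k + \<sigma>)) (lnode j) (lnode (Suc j))
      \<le> 25 / 96 * (K (lnode (Suc (Suc j))) - K (lnode (Suc j))) * (lnode (Suc (Suc j)) - lnode (Suc j))"
proof -
  define \<Delta> where "\<Delta> = lnode (Suc (Suc j)) - lnode (Suc j)"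
  define \<Delta>' where "\<Delta>' = lnode (Suc j) - lnode j"
  define L where "L = (K (lnode (Suc (Suc j))) - K (lnode (Suc j))) / \<Delta>"
  have \<Delta>: "0 < \<Delta>" "0 < \<Delta>'" "\<Delta>' \<le> 5 / 4 * \<Delta>"
    using lnode_less[of j "Suc j"] lnode_less[of "Suc j" "Suc (Suc j)"] lnode_step_le_ratio[of j]
    unfolding \<Delta>_def \<Delta>'_def by auto
  have L: "0 \<le> L"
    unfolding L_def K_def using \<Delta> assms lnode_less_logt[OF assms(1,4)]
    by (intro divide_nonneg_pos) (auto simp: \<Delta>_def intro!: frac_kernel_mono)
  have "frac_kernel_moment \<alpha> (logt (real k + \<sigma>)) (lnode j) (lnode (Suc j)) \<le> L * \<Delta>' ^ 3 / 12"
    unfolding L_def K_def \<Delta>_def \<Delta>'_def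
    using lnode_less[of j "Suc j"] lnode_less[of "Suc j" "Suc (Suc j)"] lnode_less_logt[OF assms(1,4)] assms
    by (intro frac_kernel_moment_le_slope) auto
  then have "2 / (\<Delta> + \<Delta>') * frac_kernel_moment \<alpha> (logt (real k + \<sigma>)) (lnode j) (lnode (Suc j))
      \<le> 2 / (\<Delta> + \<Delta>') * (L * \<Delta>' ^ 3 / 12)"
    using \<Delta> by (intro mult_left_mono) auto
  also have "\<dots> = L * \<Delta>'\<^sup>2 / 6 * (\<Delta>' / (\<Delta> + \<Delta>'))"
    using \<Delta> by (simp add: field_simps power2_eq_square power3_eq_cube)
  also have "\<dots> \<le> L * (5 / 4 * \<Delta>)\<^sup>2 / 6 * 1"
    using \<Delta> L by (intro mult_mono divide_right_mono mult_left_mono power_mono) auto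
  also have "\<dots> = 25 / 96 * (L * \<Delta>) * \<Delta>" by (simp add: power2_eq_square)
  finally show ?thesis
    using \<Delta> unfolding L_def \<Delta>_def \<Delta>'_def by simp
qed

lemma c_coef_le_frac_kernel:
  assumes "0 < \<sigma>" "0 \<le> \<alpha>" "\<alpha> < 1" "1 \<le> i" "i \<le> k"
  shows "c_coef \<alpha> \<sigma> ta T N i k \<le> (1 - \<alpha>) * frac_kernel \<alpha> (logt (real k + \<sigma>)) (lnode i) / Gamma (2 - \<alpha>)"
proof -
  define S where "S = logt (real k + \<sigma>)"
  let ?K = "frac_kernel \<alpha> S" and ?x = "lnode (i - 1)" and ?y = "lnode i"
  define \<Delta> where "\<Delta> = ?y - ?x"
  have xy: "?x < ?y" "?y < S" "?y - ?x \<le> lnode (i + 1) - lnode (i - 1)"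
    using assms lnode_less[of "i - 1" i] lnode_less[of i "i + 1"] lnode_less_logt unfolding S_def by auto
  have \<Delta>: "0 < \<Delta>" and K: "?K ?x \<le> ?K ?y"
    using xy frac_kernel_mono[OF assms(2), of ?x ?y S] unfolding \<Delta>_def by auto
  have g: "0 < Gamma (2 - \<alpha>)" using assms by (intro Gamma_real_pos) simp
  have tent: "frac_kernel_mass \<alpha> S ?x ?y - 2 / (lnode (i + 1) - lnode (i - 1)) * frac_kernel_moment \<alpha> S ?x ?y
      \<le> (?K ?x + ?K ?y) / 2 * \<Delta>"
    unfolding \<Delta>_def using xy assms by (intro frac_kernel_tent_upper) auto
  have prev: "(if i = 1 then 0
      else 2 / (lnode i - lnode (i - 2)) * frac_kernel_moment \<alpha> S (lnode (i - 2)) (lnode (i - 1)))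
      \<le> (?K ?y - ?K ?x) / 2 * \<Delta>"
  proof (cases "i = 1")
    case False
    define j where "j = i - 2"
    have i: "i = Suc (Suc j)" "i - 1 = Suc j" "i - 2 = j" using False assms unfolding j_def by auto
    have "2 / (lnode i - lnode (i - 2)) * frac_kernel_moment \<alpha> S (lnode (i - 2)) (lnode (i - 1))
        \<le> 25 / 96 * (?K ?y - ?K ?x) * \<Delta>"
      unfolding \<Delta>_def S_def i(2,3) unfolding i(1) using assms i(1) by (intro prev_cell_moment_le) auto
    also have "\<dots> \<le> (?K ?y - ?K ?x) / 2 * \<Delta>"
      using K \<Delta> by (intro mult_right_mono) auto
    finally show ?thesis using False by simp
  qed (use K \<Delta> in simp)
  have "c_coef \<alpha> \<sigma> ta T N i k \<le> (1 - \<alpha>) * (?K ?y * \<Delta>) / (Gamma (2 - \<alpha>) * \<Delta>)"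
    unfolding c_coef_eq[OF assms(1,3-5)] S_def[symmetric] \<Delta>_def[symmetric]
    using tent prev g \<Delta> assms by (intro divide_right_mono mult_left_mono) (auto simp: field_simps)
  also have "\<dots> = (1 - \<alpha>) * ?K ?y / Gamma (2 - \<alpha>)"
    using \<Delta> by simp
  finally show ?thesis unfolding S_def .
qed

lemma c_coef_mono:
  assumes "0 < \<sigma>" "0 \<le> \<alpha>" "\<alpha> < 1" "1 \<le> i" "i < k"
  shows "c_coef \<alpha> \<sigma> ta T N i k \<le> c_coef \<alpha> \<sigma> ta T N (Suc i) k"
proof -
  have "c_coef \<alpha> \<sigma> ta T N i k \<le> (1 - \<alpha>) * frac_kernel \<alpha> (logt (real k + \<sigma>)) (lnode i) / Gamma (2 - \<alpha>)"
    using assms by (intro c_coef_le_frac_kernel) auto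
  also have "\<dots> \<le> c_coef \<alpha> \<sigma> ta T N (Suc i) k"
    using c_coef_ge_frac_kernel[of \<sigma> \<alpha> "Suc i" k] assms by simp
  finally show ?thesis .
qed

lemma prev_cell_moment_le_diag:
  fixes j :: nat
  assumes "0 < \<sigma>" "0 \<le> \<alpha>" "\<alpha> < 1"
  defines "k \<equiv> Suc (Suc j)"
  defines "X \<equiv> logt (real k + \<sigma>) - lnode k" and "h \<equiv> lnode (Suc k) - lnode k"
  shows "2 / (lnode k - lnode j) * frac_kernel_moment \<alpha> (logt (real k + \<sigma>)) (lnode j) (lnode (Suc j))
      \<le> X powr (- \<alpha>) * (\<alpha> * h / (2 * X)) * (lnode k - lnode (Suc j))"
proof -
  let ?K = "frac_kernel \<alpha> (logt (real k + \<sigma>))" and ?P = "X powr (- \<alpha>)"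
  define \<Delta> where "\<Delta> = lnode k - lnode (Suc j)"
  have X: "0 < X" and \<Delta>: "0 < \<Delta>" "\<Delta> \<le> 5 / 4 * h"
    using lnode_less_logt[OF assms(1), of k k] lnode_less[of "Suc j" k] lnode_step_le_ratio[of "Suc j"]
    unfolding X_def \<Delta>_def h_def k_def by auto
  have "2 / (lnode k - lnode j) * frac_kernel_moment \<alpha> (logt (real k + \<sigma>)) (lnode j) (lnode (Suc j))
      \<le> 25 / 96 * (?K (lnode k) - ?K (lnode (Suc j))) * \<Delta>"
    unfolding \<Delta>_def k_def using assms by (intro prev_cell_moment_le) auto
  also have "?K (lnode k) - ?K (lnode (Suc j)) = ?P - (X + \<Delta>) powr (- \<alpha>)"
    unfolding frac_kernel_def X_def \<Delta>_def by simp
  also have "25 / 96 * (?P - (X + \<Delta>) powr (- \<alpha>)) * \<Delta> \<le> 25 / 96 * (\<alpha> * ?P * \<Delta> / X) * \<Delta>"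
    using powr_neg_decrement_le[OF X less_imp_le[OF \<Delta>(1)] assms(2)] \<Delta>
    by (intro mult_left_mono mult_right_mono) auto
  also have "\<dots> \<le> ?P * (\<alpha> * h / (2 * X)) * \<Delta>"
  proof -
    have "25 / 96 * (\<alpha> * \<Delta>) \<le> \<alpha> * h / 2"
      using mult_left_mono[OF \<Delta>(2) assms(2)] mult_nonneg_nonneg[OF assms(2), of h] \<Delta> by linarith
    then have "25 / 96 * (\<alpha> * \<Delta>) * (?P / X) \<le> \<alpha> * h / 2 * (?P / X)"
      using X by (intro mult_right_mono) auto
    then show ?thesis
      using \<Delta> X by (intro mult_right_mono) (auto simp: field_simps)
  qed
  finally show ?thesis unfolding \<Delta>_def .
qed

lemma c_coef_diag_le:
  fixes k :: nat
  assumes "0 < \<sigma>" "0 \<le> \<alpha>" "\<alpha> < 1" "1 \<le> k"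
  defines "X \<equiv> logt (real k + \<sigma>) - lnode k" and "h \<equiv> lnode (Suc k) - lnode k"
  shows "c_coef \<alpha> \<sigma> ta T N k k \<le> (1 - \<alpha>) * X powr (- \<alpha>) * (1 + \<alpha> * h / (2 * X)) / Gamma (2 - \<alpha>)"
proof -
  define S where "S = logt (real k + \<sigma>)"
  let ?x = "lnode (k - 1)" and ?y = "lnode k" and ?P = "X powr (- \<alpha>)"
  define \<Delta> where "\<Delta> = ?y - ?x"
  have xy: "?x < ?y" "?y < S" "?y - ?x \<le> lnode (k + 1) - lnode (k - 1)"
    using assms lnode_less[of "k - 1" k] lnode_less[of k "k + 1"] lnode_less_logt unfolding S_def by auto
  have X: "0 < X" and \<Delta>: "0 < \<Delta>" and h: "0 < h"
    using xy lnode_less[of k "Suc k"] unfolding X_def S_def \<Delta>_def h_def by auto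
  have g: "0 < Gamma (2 - \<alpha>)" using assms by (intro Gamma_real_pos) simp
  have mass: "frac_kernel_mass \<alpha> S ?x ?y \<le> ?P * \<Delta>"
    using frac_kernel_mass_le[of ?x ?y S \<alpha>] xy assms
    unfolding \<Delta>_def X_def S_def frac_kernel_def by simp
  have moment: "0 \<le> 2 / (lnode (k + 1) - lnode (k - 1)) * frac_kernel_moment \<alpha> S ?x ?y"
    using xy assms by (intro mult_nonneg_nonneg frac_kernel_moment_nonneg) auto
  have prev: "(if k = 1 then 0
      else 2 / (lnode k - lnode (k - 2)) * frac_kernel_moment \<alpha> S (lnode (k - 2)) (lnode (k - 1)))
      \<le> ?P * (\<alpha> * h / (2 * X)) * \<Delta>"
  proof (cases "k = 1")
    case False
    define j where "j = k - 2"
    have k: "k = Suc (Suc j)" using False assms(4) unfolding j_def by simp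
    show ?thesis
      using False prev_cell_moment_le_diag[OF assms(1-3), of j]
      unfolding X_def h_def \<Delta>_def S_def unfolding k by simp
  qed (use X \<Delta> h assms in simp)
  have "c_coef \<alpha> \<sigma> ta T N k k \<le> (1 - \<alpha>) * (?P * (1 + \<alpha> * h / (2 * X)) * \<Delta>) / (Gamma (2 - \<alpha>) * \<Delta>)"
    unfolding c_coef_eq[OF assms(1,3,4) order_refl] S_def[symmetric] \<Delta>_def[symmetric]
    using mass moment prev g \<Delta> assms by (intro divide_right_mono mult_left_mono) (auto simp: field_simps)
  also have "\<dots> = (1 - \<alpha>) * ?P * (1 + \<alpha> * h / (2 * X)) / Gamma (2 - \<alpha>)"
    using \<Delta> by simp
  finally show ?thesis .
qed

lemma sigma_sq_c_coef_diag_le: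
  assumes "0 < \<alpha>" "\<alpha> < 1" "1 \<le> k"
  defines "\<sigma> \<equiv> 1 - \<alpha> / 2"
  shows "\<sigma>\<^sup>2 * c_coef \<alpha> \<sigma> ta T N k k \<le> (1 - \<alpha>) * c_coef \<alpha> \<sigma> ta T N (Suc k) k"
proof -
  define X where "X = logt (real k + \<sigma>) - lnode k"
  define h where "h = lnode (Suc k) - lnode k"
  have \<sigma>: "0 < \<sigma>" "\<sigma> \<le> 1" unfolding \<sigma>_def using assms by auto
  have h: "0 < h" "\<sigma> * h \<le> X"
    using lnode_less[of k "Suc k"] logt_partial_step_ge[of \<sigma> k] \<sigma> unfolding h_def X_def by auto
  moreover have "0 < \<sigma> * h" using \<sigma> h by simp
  ultimately have X: "0 < X" by linarith
  have g: "0 < Gamma (2 - \<alpha>)" using assms by (intro Gamma_real_pos) simp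
  have "\<sigma>\<^sup>2 * c_coef \<alpha> \<sigma> ta T N k k
      \<le> \<sigma>\<^sup>2 * ((1 - \<alpha>) * X powr (- \<alpha>) * (1 + \<alpha> * h / (2 * X)) / Gamma (2 - \<alpha>))"
    unfolding X_def h_def using \<sigma> assms by (intro mult_left_mono c_coef_diag_le) auto
  also have "\<dots> = (1 - \<alpha>) * X powr (- \<alpha>) / Gamma (2 - \<alpha>) * (\<sigma>\<^sup>2 * (1 + \<alpha> * h / (2 * X)))"
    by simp
  also have "\<dots> \<le> (1 - \<alpha>) * X powr (- \<alpha>) / Gamma (2 - \<alpha>) * (X / h)"
    using alikhanov_sigma_bound[OF meta_eq_to_obj_eq[OF \<sigma>_def] _ _ h] assms g by (intro mult_left_mono) auto
  also have "\<dots> = (1 - \<alpha>) * (X powr (1 - \<alpha>) / (Gamma (2 - \<alpha>) * h))"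
    using powr_mult_base[of X "- \<alpha>"] X by (simp add: mult.commute)
  also have "\<dots> \<le> (1 - \<alpha>) * c_coef \<alpha> \<sigma> ta T N (Suc k) k"
    unfolding X_def h_def using \<sigma> assms by (intro mult_left_mono c_coef_next_ge) auto
  finally show ?thesis .
qed

lemma c_coef_diag_le_next:
  assumes "0 < \<alpha>" "\<alpha> < 1" "1 \<le> k"
  defines "\<sigma> \<equiv> 1 - \<alpha> / 2"
  shows "c_coef \<alpha> \<sigma> ta T N k k \<le> c_coef \<alpha> \<sigma> ta T N (Suc k) k"
proof -
  have "1 - \<alpha> \<le> \<sigma>\<^sup>2" unfolding \<sigma>_def by (simp add: power2_eq_square field_simps)
  moreover have "0 < c_coef \<alpha> \<sigma> ta T N k k"
    unfolding \<sigma>_def using assms by (intro c_coef_pos) auto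
  ultimately have "(1 - \<alpha>) * c_coef \<alpha> \<sigma> ta T N k k \<le> \<sigma>\<^sup>2 * c_coef \<alpha> \<sigma> ta T N k k"
    by (intro mult_right_mono) auto
  also have "\<dots> \<le> (1 - \<alpha>) * c_coef \<alpha> \<sigma> ta T N (Suc k) k"
    using sigma_sq_c_coef_diag_le[OF assms(1-3)] unfolding \<sigma>_def .
  finally have "(1 - \<alpha>) * c_coef \<alpha> \<sigma> ta T N k k \<le> (1 - \<alpha>) * c_coef \<alpha> \<sigma> ta T N (Suc k) k" .
  then show ?thesis using assms by simp
qed

lemma c_coef_first_pos:
  assumes "0 < \<alpha>" "\<alpha> < 1"
  shows "0 < c_coef \<alpha> (1 - \<alpha> / 2) ta T N 1 n"
proof -
  have "0 < ((real n + (1 - \<alpha> / 2)) * tau / ta) powr (- \<alpha>) / Gamma (1 - \<alpha>)"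
    using assms ta_pos tau_pos by (intro divide_pos_pos Gamma_real_pos) auto
  also have "\<dots> \<le> c_coef \<alpha> (1 - \<alpha> / 2) ta T N 1 n"
    using assms by (intro c_coef_first_ge) auto
  finally show ?thesis .
qed

lemma c_coef_le_Suc:
  assumes "0 < \<alpha>" "\<alpha> < 1" "1 \<le> i" "i \<le> n"
  shows "c_coef \<alpha> (1 - \<alpha> / 2) ta T N i n \<le> c_coef \<alpha> (1 - \<alpha> / 2) ta T N (Suc i) n"
proof (cases "i = n")
  case True
  then show ?thesis using assms by (simp add: c_coef_diag_le_next)
next
  case False
  then show ?thesis using assms by (intro c_coef_mono) auto
qed

lemma scheme_energy_step:
  assumes \<alpha>: "0 < \<alpha>" "\<alpha> < 1" and \<beta>: "1 < \<beta>" "\<beta> < 2" and "a < b" "3 \<le> M"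
    and sch: "scheme \<alpha> \<beta> (1 - \<alpha> / 2) ta T N a b M u0 f U" and n: "n < N"
  defines "c \<equiv> \<lambda>i. c_coef \<alpha> (1 - \<alpha> / 2) ta T N i n"
  shows "(\<Sum>i=1..Suc n. c i * (normh2 a b M (U i) - normh2 a b M (U (i - 1))))
       \<le> (b - a) powr \<beta> / cstar \<beta> * normh2 a b M (\<lambda>j. f (xg a b M j) (tg ta T N (real n + (1 - \<alpha> / 2))))"
proof -
  define \<sigma> where "\<sigma> = 1 - \<alpha> / 2"
  define h where "h = (b - a) / real M"
  define F where "F = (\<lambda>j. f (xg a b M j) (tg ta T N (real n + \<sigma>)))"
  define L where "L = cstar \<beta> / 2 * (b - a) powr (- \<beta>)"
  have h: "0 < h" unfolding h_def using assms by simp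
  have L: "0 < L" "L \<le> h powr (- \<beta>) * (PsiR \<beta> * gR_sum \<beta> M)"
    unfolding L_def h_def using cstar_pos[OF \<beta>] riesz_coercivity_const_le[OF \<beta>] assms by auto
  have c: "0 \<le> c 1" "\<And>i. 1 \<le> i \<Longrightarrow> i \<le> n \<Longrightarrow> c i \<le> c (Suc i)"
    unfolding c_def using c_coef_first_pos[OF \<alpha>] c_coef_le_Suc[OF \<alpha>] by (auto intro: less_imp_le)
  have "(\<Sum>i=1..Suc n. c i * ((\<Sum>j=1..M-1. (U i j)\<^sup>2) - (\<Sum>j=1..M-1. (U (i - 1) j)\<^sup>2)))
      \<le> (\<Sum>j=1..M-1. (F j)\<^sup>2) / (2 * L)"
  proof (rule discrete_energy_step[where c = c and \<sigma> = \<sigma> and U = U and F = F])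
    show "0 \<le> c (Suc n)" using mono_weights_ge_first[of n c "Suc n"] c by simp
    show "1 \<le> n \<Longrightarrow> \<sigma>\<^sup>2 * c n \<le> (2 * \<sigma> - 1) * c (Suc n)"
      unfolding c_def \<sigma>_def using sigma_sq_c_coef_diag_le[OF \<alpha>] by simp
    show "U (Suc n) 0 = 0" "U (Suc n) M = 0" "U n 0 = 0" "U n M = 0"
      using sch n unfolding scheme_def by simp_all
    show "(\<Sum>i=1..Suc n. c i * (U i j - U (i - 1) j))
        + h powr (- \<beta>) * (\<Sum>k=0..M. rZ \<beta> (int j - int k) * (\<sigma> * U (Suc n) k + (1 - \<sigma>) * U n k)) = F j"
      if "j \<in> {1..M-1}" for j
      using sch n that unfolding scheme_def c_def h_def F_def \<sigma>_def by simp
  qed (use c \<alpha> \<beta> h L \<open>3 \<le> M\<close> in \<open>auto simp: \<sigma>_def\<close>)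
  then have "h * (\<Sum>i=1..Suc n. c i * ((\<Sum>j=1..M-1. (U i j)\<^sup>2) - (\<Sum>j=1..M-1. (U (i - 1) j)\<^sup>2)))
      \<le> h * ((\<Sum>j=1..M-1. (F j)\<^sup>2) / (2 * L))"
    using h by (intro mult_left_mono) auto
  moreover have "(\<Sum>i=1..Suc n. c i * (normh2 a b M (U i) - normh2 a b M (U (i - 1))))
      = h * (\<Sum>i=1..Suc n. c i * ((\<Sum>j=1..M-1. (U i j)\<^sup>2) - (\<Sum>j=1..M-1. (U (i - 1) j)\<^sup>2)))"
    unfolding normh2_def h_def[symmetric] by (simp add: sum_distrib_left algebra_simps)
  moreover have "h * ((\<Sum>j=1..M-1. (F j)\<^sup>2) / (2 * L)) = (b - a) powr \<beta> / cstar \<beta> * normh2 a b M F"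
    unfolding L_def normh2_def h_def[symmetric] using cstar_pos[OF \<beta>] assms
    by (simp add: powr_minus field_simps)
  ultimately show ?thesis unfolding F_def \<sigma>_def by simp
qed

lemma source_term_le:
  fixes n :: nat
  assumes "0 < \<alpha>" "\<alpha> < 1" "0 \<le> B" "0 \<le> w"
  defines "x \<equiv> (real n + (1 - \<alpha> / 2)) * tau"
  shows "B * w \<le> c_coef \<alpha> (1 - \<alpha> / 2) ta T N 1 n * (B * Gamma (1 - \<alpha>) / ta powr \<alpha> * (x powr \<alpha> * w))"
proof -
  have x: "0 < x" unfolding x_def using assms tau_pos by simp
  have g: "0 < Gamma (1 - \<alpha>)" using assms by (intro Gamma_real_pos) simp
  have "(x / ta) powr (- \<alpha>) * x powr \<alpha> = ta powr \<alpha>"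
    using x ta_pos by (simp add: powr_divide powr_minus_divide)
  then have "B * w = (x / ta) powr (- \<alpha>) / Gamma (1 - \<alpha>) * (B * Gamma (1 - \<alpha>) / ta powr \<alpha> * (x powr \<alpha> * w))"
    using g ta_pos by (simp add: field_simps)
  also have "\<dots> \<le> c_coef \<alpha> (1 - \<alpha> / 2) ta T N 1 n * (B * Gamma (1 - \<alpha>) / ta powr \<alpha> * (x powr \<alpha> * w))"
    unfolding x_def using assms g ta_pos c_coef_first_ge[of \<alpha> "1 - \<alpha> / 2" n]
    by (intro mult_right_mono) auto
  finally show ?thesis .
qed

lemma scheme_stability:
  assumes \<alpha>: "0 < \<alpha>" "\<alpha> < 1" and \<beta>: "1 < \<beta>" "\<beta> < 2" and "a < b" "3 \<le> M"
    and sch: "scheme \<alpha> \<beta> (1 - \<alpha> / 2) ta T N a b M u0 f U" and n: "1 \<le> n" "n \<le> N"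
  shows "normh2 a b M (U n) \<le> normh2 a b M (U 0)
         + (b - a) powr \<beta> * Gamma (1 - \<alpha>) / (cstar \<beta> * ta powr \<alpha>)
           * Max ((\<lambda>k. ((real k + (1 - \<alpha> / 2)) * ((T - ta) / real N)) powr \<alpha>
                    * normh2 a b M (\<lambda>j. f (xg a b M j) (tg ta T N (real k + (1 - \<alpha> / 2))))) ` {..<n})"
    (is "_ \<le> _ + ?K * Max (?m ` {..<n})")
proof (rule weighted_increments_bound[where c = "\<lambda>i k. c_coef \<alpha> (1 - \<alpha> / 2) ta T N i k"])
  have normh2_nonneg: "0 \<le> normh2 a b M w" for w
    unfolding normh2_def using \<open>a < b\<close> by (simp add: sum_nonneg)
  have m: "0 \<le> ?m k" "k < n \<Longrightarrow> ?m k \<le> Max (?m ` {..<n})" for k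
    using normh2_nonneg by (auto intro: Max_ge)
  have K: "0 \<le> ?K" using cstar_pos[OF \<beta>] Gamma_real_pos[of "1 - \<alpha>"] \<alpha> by simp
  show "0 \<le> ?K * Max (?m ` {..<n})"
    using K m[of 0] n by (intro mult_nonneg_nonneg) (auto intro: order_trans)
  fix k assume k: "k < n"
  have "(\<Sum>i=1..Suc k. c_coef \<alpha> (1 - \<alpha> / 2) ta T N i k
        * (normh2 a b M (U i) - normh2 a b M (U (i - 1))))
      \<le> (b - a) powr \<beta> / cstar \<beta> * normh2 a b M (\<lambda>j. f (xg a b M j) (tg ta T N (real k + (1 - \<alpha> / 2))))"
    using scheme_energy_step[OF \<alpha> \<beta> \<open>a < b\<close> \<open>3 \<le> M\<close> sch] k n by simp
  also have "\<dots> \<le> c_coef \<alpha> (1 - \<alpha> / 2) ta T N 1 k * (?K * ?m k)"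
    using source_term_le[OF \<alpha>, of "(b - a) powr \<beta> / cstar \<beta>"] cstar_pos[OF \<beta>] normh2_nonneg
    by (simp add: tau_def mult.assoc)
  also have "\<dots> \<le> c_coef \<alpha> (1 - \<alpha> / 2) ta T N 1 k * (?K * Max (?m ` {..<n}))"
    using c_coef_first_pos[OF \<alpha>, of k] K m k by (intro mult_left_mono) auto
  finally show "(\<Sum>i=1..Suc k. c_coef \<alpha> (1 - \<alpha> / 2) ta T N i k * (normh2 a b M (U i) - normh2 a b M (U (i - 1))))
      \<le> c_coef \<alpha> (1 - \<alpha> / 2) ta T N 1 k * (?K * Max (?m ` {..<n}))" .
qed (use c_coef_first_pos[OF \<alpha>] c_coef_le_Suc[OF \<alpha>] in auto)

end

theorem theorem3p1:
  fixes \<alpha> \<beta> ta T a b :: real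
  assumes "0 < \<alpha>" "\<alpha> < 1" "1 < \<beta>" "\<beta> < 2"
    and "0 < ta" "ta < T" "a < b"
  shows "\<exists>\<tau>0 > 0. \<exists>h0 > 0. \<forall>(N::nat) (M::nat) u0 f U.
    0 < N \<longrightarrow> 0 < M \<longrightarrow> (T - ta) / real N \<le> \<tau>0 \<longrightarrow> (b - a) / real M \<le> h0 \<longrightarrow>
    scheme \<alpha> \<beta> (1 - \<alpha> / 2) ta T N a b M u0 f U \<longrightarrow>
    (\<forall>n \<in> {1..N}.
       normh2 a b M (U n) \<le> normh2 a b M (U 0)
         + (b - a) powr \<beta> * Gamma (1 - \<alpha>) / (cstar \<beta> * ta powr \<alpha>)
           * Max ((\<lambda>k. ((real k + (1 - \<alpha> / 2)) * ((T - ta) / real N)) powr \<alpha>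
                    * normh2 a b M (\<lambda>j. f (xg a b M j) (tg ta T N (real k + (1 - \<alpha> / 2))))) ` {..<n}))"
proof (rule exI[of _ "ta / 8"], intro conjI exI[of _ "(b - a) / 3"] allI impI ballI)
  show "0 < ta / 8" "0 < (b - a) / 3" using assms by simp_all
  fix N M :: nat and u0 f U n
  assume N: "0 < N" "(T - ta) / real N \<le> ta / 8" and M: "0 < M" "(b - a) / real M \<le> (b - a) / 3"
    and sch: "scheme \<alpha> \<beta> (1 - \<alpha> / 2) ta T N a b M u0 f U" and n: "n \<in> {1..N}"
  interpret fine_log_grid ta T N
    using assms N by unfold_locales auto
  have "(b - a) * 3 \<le> (b - a) * real M"
    using M assms by (simp add: field_simps)
  then have "3 \<le> M"
    using assms mult_le_cancel_left_pos[of "b - a" 3 "real M"] by simp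
  from scheme_stability[OF assms(1-4,7) this sch] n
  show "normh2 a b M (U n) \<le> normh2 a b M (U 0)
         + (b - a) powr \<beta> * Gamma (1 - \<alpha>) / (cstar \<beta> * ta powr \<alpha>)
           * Max ((\<lambda>k. ((real k + (1 - \<alpha> / 2)) * ((T - ta) / real N)) powr \<alpha>
                    * normh2 a b M (\<lambda>j. f (xg a b M j) (tg ta T N (real k + (1 - \<alpha> / 2))))) ` {..<n})"
    by simp
qed

end
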